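(* Suppose that $\alpha_n=O\bigl((d_n+1)!^2\bigr)$ as $n\to\infty$. Then there is a constant $A>0$ such that $$\widetilde\chi(\Delta_n)=O\!\left(n\exp\!\left(-A\,\frac{\log n\,\log\log\log n}{\log\log n}\right)\right).$$
   Context: For a squarefree positive integer $k$ let $P(k)$ be its set of prime factors ($P(1)=\emptyset$). $\Delta_n$ is the abstract simplicial complex $\{P(k):1\le k\le n,\ k\text{ squarefree}\}$; a $d$-simplex is a member of cardinality $d+1$, $d_n=\dim\Delta_n$ is the largest such $d$, and $f^{\Delta_n}_{d_n}$ is the number of $d_n$-simplices. The reduced Euler characteristic is $\widetilde\chi(\Delta)=\sum_{\sigma\in\Delta}(-1)^{\#\sigma-1}$ (so $\widetilde\chi(\Delta_n)=-M(n)$, $M$ the Mertens function). For integers $i,d\ge -1$ define $f_{-1,-1}=1$, $f_{-1,d}=0$ for $d\ge0$, $f_{i,-1}=0$ for $i\ge0$, $f_{i,d}=(i+1)!\,S(d+1,i+1)$ for $i,d\ge0$ ($S$ = Stirling numbers of the second kind); for $d\ge0$ set $F_{d,d}=1$ and recursively for $-1\le i\le d-1$, $F_{i,d}=\frac{1}{(d+1)!-(i+1)!}\sum_{j=i+1}^{d}f_{i,j}F_{j,d}$; $F_d(z)=\sum_{i=-1}^dF_{i,d}z^{d-i}$ and $H_d(z)=F_d(z-1)=\sum_{i=0}^{d+1}H_{i,d}z^{d+1-i}$. For $n\ge6$ define $\alpha_n=\dfrac{\widetilde\chi(\Delta_n)}{H_{1,d_n}\,f^{\Delta_n}_{d_n}}$.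 *)

theory Defs
  imports "HOL-Computational_Algebra.Computational_Algebra" "HOL-Combinatorics.Stirling"
    "HOL-Library.Landau_Symbols" Complex_Main
begin

definition Delta :: "nat \<Rightarrow> nat set set" where
  "Delta n = {prime_factors k | k. 1 \<le> k \<and> k \<le> n \<and> squarefree k}"

text \<open>Reduced Euler characteristic: sum over faces of (-1)^(card sigma - 1), where the exponent -1 (empty face) gives -1.\<close>
definition red_euler :: "nat set set \<Rightarrow> int" where
  "red_euler D = (\<Sum>\<sigma>\<in>D. if card \<sigma> = 0 then -1 else (-1::int) ^ (card \<sigma> - 1))"

definition dimc :: "nat set set \<Rightarrow> nat" where
  "dimc D = Max (card ` D) - 1"

definition fvec :: "nat set set \<Rightarrow> nat \<Rightarrow> nat" where
  "fvec D d = card {\<sigma>\<in>D. card \<sigma> = d + 1}"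

definition fcoef :: "int \<Rightarrow> int \<Rightarrow> real" where
  "fcoef i d = (if i = -1 \<and> d = -1 then 1
     else if i = -1 \<or> d = -1 then 0
     else fact (nat (i + 1)) * real (Stirling (nat (d + 1)) (nat (i + 1))))"

function Fcoef :: "int \<Rightarrow> int \<Rightarrow> real" where
  "Fcoef i d = (if i = d then 1
     else if i < -1 \<or> d < i then 0
     else (1 / (fact (nat (d + 1)) - fact (nat (i + 1)))) *
            (\<Sum>j\<in>{i+1..d}. fcoef i j * Fcoef j d))"
  by auto
termination by (relation "measure (\<lambda>(i, d). nat (d - i))") auto

definition Fpoly :: "nat \<Rightarrow> real poly" where
  "Fpoly d = (\<Sum>i\<in>{-1..int d}. monom (Fcoef i (int d)) (nat (int d - i)))"

definition Hpoly :: "nat \<Rightarrow> real poly" where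
  "Hpoly d = pcompose (Fpoly d) [:-1, 1:]"

definition Hcoef :: "nat \<Rightarrow> nat \<Rightarrow> real" where
  "Hcoef i d = coeff (Hpoly d) (d + 1 - i)"

definition alpha :: "nat \<Rightarrow> real" where
  "alpha n = real_of_int (red_euler (Delta n)) /
     (Hcoef 1 (dimc (Delta n)) * real (fvec (Delta n) (dimc (Delta n))))"

end

theory Submission
  imports Defs "HOL-Real_Asymp.Real_Asymp"
begin

text \<open>
  Let \<open>m = d\<^sub>n + 1\<close> be the largest size of a face of \<open>\<Delta>\<^sub>n\<close> and \<open>f\<close> the number of faces of that
  size. As the first \<open>m\<close> primes form a face and the first \<open>m + 1\<close> do not,
  \<open>p\<^sub>0 \<cdots> p\<^sub>m\<^sub>-\<^sub>1 \<le> n < p\<^sub>0 \<cdots> p\<^sub>m\<close>.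
  The recursion defining \<open>F\<^sub>i\<^sub>,\<^sub>d\<close> gives \<open>0 < H\<^sub>1\<^sub>,\<^sub>d \<le> 2\<^bsup>d+1\<^esup> / ((d+1)! - 1)\<close>, so the hypothesis
  on \<open>\<alpha>\<^sub>n\<close> yields \<open>|\<chi>(\<Delta>\<^sub>n)| \<le> C m! 2\<^sup>m f\<close>.

  A face of size \<open>m\<close> arises from the first \<open>m\<close> primes by exchanging \<open>j\<close> of them for \<open>j\<close> primes
  \<open>> p\<^sub>m\<^sub>-\<^sub>1\<close>; as its product is still below \<open>p\<^sub>0 \<cdots> p\<^sub>m\<close>, this forces
  \<open>j = O(\<surd>(p\<^sub>m log p\<^sub>m))\<close>, whence \<open>log f = O(\<surd>m log\<^sup>2 m)\<close>. On the other hand Chebyshev's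
  bounds give \<open>p\<^sub>i \<ge> (i+1)(log(i+1) - 1)/log 4\<close>, so \<open>log n \<ge> \<Sum> log p\<^sub>i \<ge> log m! + (m/2)(log log m - O(1))\<close>.
  Hence \<open>log (m! 2\<^sup>m f) \<le> log n - c m log log m\<close>, and \<open>m log log m\<close> dominates
  \<open>log n log log log n / log log n\<close> because \<open>log n\<close> is of order \<open>m log m\<close>.
\<close>

section \<open>The coefficient \<open>H\<^sub>1\<^sub>,\<^sub>d\<close>\<close>

lemma Stirling_le_choose_mult_pow: "Stirling n k \<le> (n choose k) * k ^ (n - k)"
proof (induction n arbitrary: k)
  case 0
  then show ?case by (cases k) auto
next
  case (Suc n)
  show ?case
  proof (cases k)
    case 0
    then show ?thesis by simp
  next
    case (Suc j)
    show ?thesis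
    proof (cases "j < n")
      case True
      have "Suc j * Stirling n (Suc j) \<le> Suc j * ((n choose Suc j) * Suc j ^ (n - Suc j))"
        using Suc.IH by (rule mult_le_mono2)
      also have "\<dots> = (n choose Suc j) * Suc j ^ (n - j)"
      proof -
        have "n - j = Suc (n - Suc j)" using True by simp
        then show ?thesis by (simp only: power_Suc) (simp add: algebra_simps)
      qed
      finally have "Suc j * Stirling n (Suc j) \<le> (n choose Suc j) * Suc j ^ (n - j)" .
      moreover have "Stirling n j \<le> (n choose j) * Suc j ^ (n - j)"
      proof -
        have "(n choose j) * j ^ (n - j) \<le> (n choose j) * Suc j ^ (n - j)"
          by (simp add: power_mono)
        then show ?thesis using Suc.IH[of j] by linarith
      qed
      ultimately have "Suc j * Stirling n (Suc j) + Stirling n j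
          \<le> (n choose Suc j) * Suc j ^ (n - j) + (n choose j) * Suc j ^ (n - j)"
        by (rule add_mono)
      then show ?thesis
        using Suc by (simp add: algebra_simps)
    next
      case False
      then show ?thesis
        using Suc by (cases "j = n") auto
    qed
  qed
qed

lemma fact_mult_pow_le_fact: "fact (i + 1) * (i + 2) ^ r \<le> (fact (i + 1 + r) :: nat)"
proof (induction r)
  case 0
  then show ?case by simp
next
  case (Suc r)
  have "fact (i + 1) * (i + 2) ^ Suc r = (i + 2) * (fact (i + 1) * (i + 2) ^ r)"
    by (simp add: algebra_simps)
  also have "\<dots> \<le> (i + 2 + r) * fact (i + 1 + r)"
    using Suc.IH by (intro mult_le_mono) auto
  finally show ?case by (simp add: algebra_simps)
qed

lemma binomial_sum_from_1: "(\<Sum>l=1..r. (r choose l) * a ^ l) = (a + 1 :: nat) ^ r - 1"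
proof -
  have "{..r} = insert 0 {1..r}" by auto
  then show ?thesis
    using binomial_ring[of a 1 r] by (simp add: add.commute)
qed

text \<open>This estimate keeps the bound \<open>F\<^sub>i\<^sub>,\<^sub>d \<le> (d+1 choose i+1)\<close> inductive through the recursion.\<close>
lemma sum_Stirling_choose_le:
  assumes "i < d"
  shows "(\<Sum>j=i+1..d. fact (i + 1) * Stirling (j + 1) (i + 1) * ((d + 1) choose (j + 1)))
         \<le> (fact (d + 1) - fact (i + 1)) * ((d + 1) choose (i + 1))"
proof -
  have "(\<Sum>j=i+1..d. fact (i + 1) * Stirling (j + 1) (i + 1) * ((d + 1) choose (j + 1)))
     \<le> (\<Sum>j=i+1..d. fact (i + 1) * (((j + 1) choose (i + 1)) * (i + 1) ^ (j - i)) * ((d + 1) choose (j + 1)))"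
  proof (intro sum_mono mult_le_mono le_refl)
    fix j
    show "Stirling (j + 1) (i + 1) \<le> ((j + 1) choose (i + 1)) * (i + 1) ^ (j - i)"
      using Stirling_le_choose_mult_pow[of "j + 1" "i + 1"] by simp
  qed
  also have "\<dots> = (\<Sum>j=i+1..d. fact (i + 1) * ((d + 1) choose (i + 1)) * (((d - i) choose (j - i)) * (i + 1) ^ (j - i)))"
  proof (rule sum.cong)
    fix j assume "j \<in> {i+1..d}"
    then have choose: "((d + 1) choose (j + 1)) * ((j + 1) choose (i + 1)) = ((d + 1) choose (i + 1)) * ((d - i) choose (j - i))"
      using choose_mult[of "i + 1" "j + 1" "d + 1"] by simp
    have "fact (i + 1) * (((j + 1) choose (i + 1)) * (i + 1) ^ (j - i)) * ((d + 1) choose (j + 1))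
      = fact (i + 1) * (i + 1) ^ (j - i) * (((d + 1) choose (j + 1)) * ((j + 1) choose (i + 1)))"
      by (simp only: mult_ac)
    also have "\<dots> = fact (i + 1) * ((d + 1) choose (i + 1)) * (((d - i) choose (j - i)) * (i + 1) ^ (j - i))"
      unfolding choose by (simp only: mult_ac)
    finally show "fact (i + 1) * (((j + 1) choose (i + 1)) * (i + 1) ^ (j - i)) * ((d + 1) choose (j + 1))
      = fact (i + 1) * ((d + 1) choose (i + 1)) * (((d - i) choose (j - i)) * (i + 1) ^ (j - i))" .
  qed simp
  also have "\<dots> = fact (i + 1) * ((d + 1) choose (i + 1)) * ((i + 2) ^ (d - i) - 1)"
  proof -
    have "(\<Sum>j=i+1..d. ((d - i) choose (j - i)) * (i + 1) ^ (j - i))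
        = (\<Sum>l=1..d-i. ((d - i) choose l) * (i + 1) ^ l)"
      using assms sum.shift_bounds_cl_nat_ivl[of "\<lambda>j. ((d - i) choose (j - i)) * (i + 1) ^ (j - i)" 1 i "d - i"]
      by (simp add: add.commute)
    then show ?thesis
      using binomial_sum_from_1[of "d - i" "i + 1"] by (simp add: sum_distrib_left[symmetric])
  qed
  also have "\<dots> \<le> (fact (d + 1) - fact (i + 1)) * ((d + 1) choose (i + 1))"
  proof -
    have "fact (i + 1) * (i + 2) ^ (d - i) \<le> (fact (d + 1) :: nat)"
      using fact_mult_pow_le_fact[of i "d - i"] assms by simp
    then have "fact (i + 1) * ((i + 2) ^ (d - i) - 1) \<le> (fact (d + 1) - fact (i + 1) :: nat)"
      by (simp add: diff_mult_distrib2)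
    then have "fact (i + 1) * ((i + 2) ^ (d - i) - 1) * ((d + 1) choose (i + 1))
        \<le> (fact (d + 1) - fact (i + 1)) * ((d + 1) choose (i + 1))"
      by (rule mult_le_mono1)
    then show ?thesis
      by (simp only: mult_ac)
  qed
  finally show ?thesis .
qed

declare Fcoef.simps[simp del]

lemma Fcoef_diag: "Fcoef i i = 1"
  by (subst Fcoef.simps) simp

lemma Fcoef_minus_one: "Fcoef (-1) (int d) = 0"
proof -
  have "fcoef (-1) j = 0" if "j \<in> {0..int d}" for j
    using that unfolding fcoef_def by auto
  then show ?thesis by (subst Fcoef.simps) simp
qed

lemma Fcoef_rec_nat:
  assumes "i < d"
  shows "Fcoef (int i) (int d) = (1 / (fact (d + 1) - fact (i + 1))) *
     (\<Sum>j=i+1..d. fact (i + 1) * real (Stirling (j + 1) (i + 1)) * Fcoef (int j) (int d))"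
proof -
  have "{int i + 1..int d} = int ` {i+1..d}"
    by (simp add: image_int_atLeastAtMost)
  moreover have "fcoef (int i) (int j) = fact (i + 1) * real (Stirling (j + 1) (i + 1))" for j
    unfolding fcoef_def by (simp add: nat_add_distrib)
  ultimately show ?thesis
    using assms by (subst Fcoef.simps) (simp add: sum.reindex nat_add_distrib)
qed

lemma Fcoef_nonneg_le_choose:
  "i \<le> d \<Longrightarrow> 0 \<le> Fcoef (int i) (int d) \<and> Fcoef (int i) (int d) \<le> real ((d + 1) choose (i + 1))"
proof (induction "d - i" arbitrary: i rule: less_induct)
  case less
  show ?case
  proof (cases "i = d")
    case True
    then show ?thesis by (simp add: Fcoef_diag)
  next
    case False
    then have "i < d" using less.prems by simp
    have IH: "0 \<le> Fcoef (int j) (int d) \<and> Fcoef (int j) (int d) \<le> real ((d + 1) choose (j + 1))"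
      if "j \<in> {i+1..d}" for j
      using less.hyps that by auto
    define S where "S = (\<Sum>j=i+1..d. fact (i + 1) * real (Stirling (j + 1) (i + 1)) * Fcoef (int j) (int d))"
    have gap: "fact (i + 1) < (fact (d + 1) :: real)"
      using \<open>i < d\<close> by (intro fact_less_mono) auto
    have "S \<le> (\<Sum>j=i+1..d. fact (i + 1) * real (Stirling (j + 1) (i + 1)) * real ((d + 1) choose (j + 1)))"
      unfolding S_def using IH by (intro sum_mono mult_left_mono) auto
    also have "\<dots> = real (\<Sum>j=i+1..d. fact (i + 1) * Stirling (j + 1) (i + 1) * ((d + 1) choose (j + 1)))"
      by (simp only: of_nat_sum of_nat_mult of_nat_fact)
    also have "\<dots> \<le> real ((fact (d + 1) - fact (i + 1)) * ((d + 1) choose (i + 1)))"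
      using sum_Stirling_choose_le[OF \<open>i < d\<close>] by linarith
    also have "\<dots> = (fact (d + 1) - fact (i + 1)) * real ((d + 1) choose (i + 1))"
      using fact_mono_nat[of "i + 1" "d + 1"] \<open>i < d\<close> by (simp only: of_nat_mult of_nat_diff of_nat_fact)
    finally have "S \<le> (fact (d + 1) - fact (i + 1)) * real ((d + 1) choose (i + 1))" .
    moreover have "0 \<le> S"
      unfolding S_def using IH by (intro sum_nonneg) auto
    moreover have "Fcoef (int i) (int d) = S / (fact (d + 1) - fact (i + 1))"
      unfolding S_def using Fcoef_rec_nat[OF \<open>i < d\<close>] by simp
    ultimately show ?thesis
      using gap by (simp add: pos_divide_le_eq mult.commute)
  qed
qed

lemma Fcoef_0_eq_sum:
  assumes "d \<ge> 1"
  shows "Fcoef 0 (int d) = (\<Sum>j=1..d. Fcoef (int j) (int d)) / (fact (d + 1) - 1)"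
proof -
  have "Stirling (j + 1) (0 + 1) = 1" for j
    by (metis Stirling_1 Suc_eq_plus1 One_nat_def)
  moreover have "Fcoef (int 0) (int d) = (1 / (fact (d + 1) - fact (0 + 1))) *
     (\<Sum>j=0+1..d. fact (0 + 1) * real (Stirling (j + 1) (0 + 1)) * Fcoef (int j) (int d))"
    using assms by (intro Fcoef_rec_nat) auto
  ultimately show ?thesis by simp
qed

lemma coeff_linear_power_below: "k < j \<Longrightarrow> coeff ([:-1, 1:] ^ k) j = (0 :: real)"
  by (rule coeff_eq_0) (simp add: degree_linear_power)

lemma coeff_linear_power_degree: "coeff ([:-1, 1:] ^ k) k = (1 :: real)"
  using lead_coeff_power[of "[:-1, 1::real:]" k] by (simp add: degree_linear_power)

text \<open>Only the term \<open>i = 0\<close> of \<open>H\<^sub>d(z) = \<Sum>\<^sub>i F\<^sub>i\<^sub>,\<^sub>d (z - 1)\<^bsup>d-i\<^esup>\<close> reaches degree \<open>d\<close>, since \<open>F\<^sub>-\<^sub>1\<^sub>,\<^sub>d = 0\<close>.\<close>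
lemma Hcoef_1_eq: "Hcoef 1 d = Fcoef 0 (int d)"
proof -
  have "[:0, 1:] ^ k \<circ>\<^sub>p r = (r ^ k :: real poly)" for k r
    by (induction k) (auto simp: pcompose_mult pcompose_pCons one_pCons)
  then have "Hpoly d = (\<Sum>i\<in>{-1..int d}. smult (Fcoef i (int d)) ([:-1, 1:] ^ nat (int d - i)))"
    unfolding Hpoly_def Fpoly_def pcompose_sum by (simp add: monom_altdef pcompose_smult)
  then have "Hcoef 1 d = (\<Sum>i\<in>{-1..int d}. Fcoef i (int d) * coeff ([:-1, 1:] ^ nat (int d - i)) d)"
    unfolding Hcoef_def by (simp add: coeff_sum)
  also have "\<dots> = (\<Sum>i\<in>{-1..int d}. if i = 0 then Fcoef 0 (int d) else 0)"
  proof (rule sum.cong)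
    fix i assume i: "i \<in> {-1..int d}"
    consider "i = -1" | "i = 0" | "0 < i" using i by fastforce
    then show "Fcoef i (int d) * coeff ([:-1, 1:] ^ nat (int d - i)) d = (if i = 0 then Fcoef 0 (int d) else 0)"
      by cases (use i in \<open>auto simp: Fcoef_minus_one coeff_linear_power_degree coeff_linear_power_below\<close>)
  qed simp
  finally show ?thesis by simp
qed

lemma Hcoef_1_pos:
  assumes "d \<ge> 1"
  shows "0 < Hcoef 1 d"
proof -
  have "Fcoef (int d) (int d) \<le> (\<Sum>j=1..d. Fcoef (int j) (int d))"
    using assms Fcoef_nonneg_le_choose by (intro member_le_sum) auto
  moreover have "(1 :: real) < fact (d + 1)"
    using fact_less_mono[of 1 "d + 1"] assms by simp
  ultimately show ?thesis
    unfolding Hcoef_1_eq Fcoef_0_eq_sum[OF assms] by (simp add: Fcoef_diag)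
qed

lemma Hcoef_1_le:
  assumes "d \<ge> 1"
  shows "Hcoef 1 d \<le> 2 ^ (d + 1) / (fact (d + 1) - 1)"
proof -
  have "(\<Sum>j=1..d. Fcoef (int j) (int d)) \<le> (\<Sum>j=1..d. real ((d + 1) choose (j + 1)))"
    using Fcoef_nonneg_le_choose by (intro sum_mono) auto
  also have "\<dots> = (\<Sum>j=1+1..d+1. real ((d + 1) choose j))"
    by (rule sum.shift_bounds_cl_nat_ivl[symmetric])
  also have "\<dots> \<le> (\<Sum>j\<le>d+1. real ((d + 1) choose j))"
    by (intro sum_mono2) auto
  also have "\<dots> = 2 ^ (d + 1)"
    using choose_row_sum[of "d + 1"] by (simp only: of_nat_sum[symmetric]) simp
  finally have "(\<Sum>j=1..d. Fcoef (int j) (int d)) \<le> 2 ^ (d + 1)" .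
  moreover have "(1 :: real) < fact (d + 1)"
    using fact_less_mono[of 1 "d + 1"] assms by simp
  ultimately show ?thesis
    unfolding Hcoef_1_eq Fcoef_0_eq_sum[OF assms] by (intro divide_right_mono) auto
qed

section \<open>The \<open>k\<close>-th prime\<close>

text \<open>Indexed from \<open>0\<close>: \<open>nth_prime 0 = 2\<close>.\<close>
definition nth_prime :: "nat \<Rightarrow> nat" where
  "nth_prime k = enumerate {p. prime p} k"

lemma infinite_primes_nat: "infinite {p :: nat. prime p}"
  using primes_infinite by simp

lemma prime_nth_prime: "prime (nth_prime k)"
  unfolding nth_prime_def using enumerate_in_set[OF infinite_primes_nat] by simp

lemma nth_prime_less_iff [simp]: "nth_prime i < nth_prime j \<longleftrightarrow> i < j"
  unfolding nth_prime_def using infinite_primes_nat by simp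

lemma nth_prime_le_iff [simp]: "nth_prime i \<le> nth_prime j \<longleftrightarrow> i \<le> j"
  unfolding nth_prime_def using infinite_primes_nat by simp

lemma strict_mono_nth_prime: "strict_mono nth_prime"
  by (rule strict_monoI) simp

lemma nth_prime_eq_iff [simp]: "nth_prime i = nth_prime j \<longleftrightarrow> i = j"
  using strict_mono_eq[OF strict_mono_nth_prime] .

lemma nth_prime_exists: "prime q \<Longrightarrow> \<exists>i. nth_prime i = q"
  unfolding nth_prime_def using enumerate_Ex[OF infinite_primes_nat] by auto

lemma nth_prime_ge: "k + 2 \<le> nth_prime k"
proof (induction k)
  case 0
  then show ?case using prime_ge_2_nat[OF prime_nth_prime[of 0]] by simp
next
  case (Suc k)
  have "nth_prime k < nth_prime (Suc k)" by simp
  then show ?case using Suc by linarith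
qed

lemma primes_less_nth_prime: "{q. prime q \<and> q < nth_prime k} = nth_prime ` {..<k}"
proof
  show "{q. prime q \<and> q < nth_prime k} \<subseteq> nth_prime ` {..<k}"
  proof
    fix q assume "q \<in> {q. prime q \<and> q < nth_prime k}"
    then obtain i where "nth_prime i = q" "q < nth_prime k" using nth_prime_exists by auto
    then show "q \<in> nth_prime ` {..<k}" by auto
  qed
  show "nth_prime ` {..<k} \<subseteq> {q. prime q \<and> q < nth_prime k}"
    using prime_nth_prime by auto
qed

lemma primes_le_nth_prime: "{q. prime q \<and> q \<le> nth_prime k} = nth_prime ` {..k}"
proof
  show "{q. prime q \<and> q \<le> nth_prime k} \<subseteq> nth_prime ` {..k}"
  proof
    fix q assume "q \<in> {q. prime q \<and> q \<le> nth_prime k}"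
    then obtain i where "nth_prime i = q" "q \<le> nth_prime k" using nth_prime_exists by auto
    then show "q \<in> nth_prime ` {..k}" by auto
  qed
  show "nth_prime ` {..k} \<subseteq> {q. prime q \<and> q \<le> nth_prime k}"
    using prime_nth_prime by auto
qed

lemma nth_prime_le_if_card_ge:
  assumes "finite A" "\<forall>a\<in>A. prime a" "k + 1 \<le> card A" "\<forall>a\<in>A. a \<le> x"
  shows "nth_prime k \<le> x"
proof (rule ccontr)
  assume "\<not> nth_prime k \<le> x"
  then have "A \<subseteq> {q. prime q \<and> q < nth_prime k}"
    using assms(2,4) by force
  then have "A \<subseteq> nth_prime ` {..<k}"
    unfolding primes_less_nth_prime .
  then have "card A \<le> card (nth_prime ` {..<k})"
    by (intro card_mono) auto
  also have "\<dots> \<le> k"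
    using card_image_le[of "{..<k}" nth_prime] by simp
  finally show False using assms(3) by simp
qed

lemma prod_nth_primes_le_prod:
  "finite A \<Longrightarrow> \<forall>a\<in>A. prime a \<Longrightarrow> card A = k \<Longrightarrow> (\<Prod>i<k. nth_prime i) \<le> \<Prod>A"
proof (induction k arbitrary: A)
  case 0
  then show ?case by simp
next
  case (Suc k)
  then have "A \<noteq> {}" by auto
  define a where "a = Max A"
  have "a \<in> A"
    using Max_in[OF Suc.prems(1) \<open>A \<noteq> {}\<close>] a_def by simp
  have "card (A - {a}) = k"
    using Suc.prems \<open>a \<in> A\<close> by simp
  then have IH: "(\<Prod>i<k. nth_prime i) \<le> \<Prod>(A - {a})"
    using Suc.IH[of "A - {a}"] Suc.prems by auto
  have "nth_prime k \<le> a"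
    using Suc.prems Max_ge[OF Suc.prems(1)] a_def by (intro nth_prime_le_if_card_ge[of A]) auto
  have "(\<Prod>i<Suc k. nth_prime i) = nth_prime k * (\<Prod>i<k. nth_prime i)"
    by simp
  also have "\<dots> \<le> a * \<Prod>(A - {a})"
    using IH \<open>nth_prime k \<le> a\<close> by (intro mult_le_mono) auto
  also have "\<dots> = \<Prod>A"
    using \<open>a \<in> A\<close> Suc.prems(1) by (simp add: prod.remove)
  finally show ?case .
qed

subsection \<open>Chebyshev's upper bound\<close>

definition primorial :: "nat \<Rightarrow> nat" where
  "primorial N = \<Prod>{p. prime p \<and> p \<le> N}"

lemma prod_primes_dvd:
  "finite A \<Longrightarrow> \<forall>p\<in>A. prime p \<and> p dvd (c :: nat) \<Longrightarrow> \<Prod>A dvd c"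
proof (induction A rule: finite_induct)
  case empty
  then show ?case by simp
next
  case (insert a A)
  have "\<not> a dvd \<Prod>A"
  proof
    assume "a dvd \<Prod>A"
    then obtain b where "b \<in> A" "a dvd b"
      using insert prime_dvd_prod_iff[of A a id] by auto
    then have "a = b"
      using insert by (metis insert_iff primes_dvd_imp_eq)
    then show False
      using insert \<open>b \<in> A\<close> by simp
  qed
  then have "coprime a (\<Prod>A)"
    using insert by (intro prime_imp_coprime) auto
  then show ?case
    using insert by (simp add: divides_mult)
qed

text \<open>The primes in \<open>(n+1, 2n+1]\<close> all divide \<open>(2n+1 choose n) \<le> 4\<^sup>n\<close>.\<close>
lemma prod_primes_between_le:
  "\<Prod>{p. prime p \<and> n + 1 < p \<and> p \<le> 2 * n + 1} \<le> 4 ^ n"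
proof -
  define C where "C = (2 * n + 1) choose n"
  have fact_eq: "fact n * fact (n + 1) * C = fact (2 * n + 1)"
    using binomial_fact_lemma[of n "2 * n + 1"] unfolding C_def by (simp add: algebra_simps)
  have "\<Prod>{p. prime p \<and> n + 1 < p \<and> p \<le> 2 * n + 1} dvd C"
  proof (rule prod_primes_dvd)
    show "\<forall>p\<in>{p. prime p \<and> n + 1 < p \<and> p \<le> 2 * n + 1}. prime p \<and> p dvd C"
    proof
      fix p assume p: "p \<in> {p. prime p \<and> n + 1 < p \<and> p \<le> 2 * n + 1}"
      then have "prime p" by simp
      have "p dvd fact n * fact (n + 1) * C"
        using p fact_eq dvd_fact[of p "2 * n + 1"] by auto
      moreover have "\<not> p dvd fact n"
        using p prime_dvd_fact_iff[OF \<open>prime p\<close>] by simp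
      moreover have "\<not> p dvd fact (n + 1)"
        using p prime_dvd_fact_iff[OF \<open>prime p\<close>, of "n + 1"] by auto
      ultimately show "prime p \<and> p dvd C"
        using \<open>prime p\<close> prime_dvd_mult_iff by metis
    qed
  qed simp
  then have "\<Prod>{p. prime p \<and> n + 1 < p \<and> p \<le> 2 * n + 1} \<le> C"
    by (rule dvd_imp_le) (simp add: C_def)
  also have "C \<le> 4 ^ n"
  proof -
    have "C + ((2 * n + 1) choose (n + 1)) \<le> (\<Sum>k\<le>2*n+1. (2 * n + 1) choose k)"
      using sum_mono2[of "{..2*n+1}" "{n, n + 1}" "\<lambda>k. (2 * n + 1) choose k"]
      unfolding C_def by simp
    moreover have "(2 * n + 1) choose (n + 1) = C"
      unfolding C_def using binomial_symmetric[of "n + 1" "2 * n + 1"] by simp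
    ultimately have "2 * C \<le> 2 ^ (2 * n + 1)"
      using choose_row_sum[of "2 * n + 1"] by simp
    then show ?thesis by (simp add: power_mult)
  qed
  finally show ?thesis .
qed

lemma primorial_le_4_pow: "primorial N \<le> 4 ^ N"
proof (induction N rule: less_induct)
  case (less N)
  show ?case
  proof (cases "N \<le> 2")
    case True
    have "{p. prime p \<and> p \<le> N} \<subseteq> {2}"
    proof
      fix p assume "p \<in> {p. prime p \<and> p \<le> N}"
      then show "p \<in> {2}" using prime_ge_2_nat[of p] True by simp
    qed
    then have "{p. prime p \<and> p \<le> N} = {} \<or> {p. prime p \<and> p \<le> N} = {2}"
      by (rule subset_singletonD)
    then show ?thesis
    proof
      assume no_primes: "{p. prime p \<and> p \<le> N} = {}"
      show ?thesis unfolding primorial_def no_primes by simp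
    next
      assume primes: "{p. prime p \<and> p \<le> N} = {2}"
      then have "2 \<in> {p. prime p \<and> p \<le> N}" by simp
      then have "N \<ge> 1" by simp
      then have "(4 :: nat) ^ 1 \<le> 4 ^ N" by (intro power_increasing) auto
      then show ?thesis unfolding primorial_def primes by simp
    qed
  next
    case False
    show ?thesis
    proof (cases "even N")
      case True
      then have "\<not> prime N"
        using False prime_odd_nat[of N] by auto
      have "p \<le> N \<longleftrightarrow> p \<le> N - 1" if "prime p" for p
      proof -
        have "p \<noteq> N" using \<open>\<not> prime N\<close> that by auto
        then show ?thesis by arith
      qed
      then have "{p. prime p \<and> p \<le> N} = {p. prime p \<and> p \<le> N - 1}"
        by blast
      then have "primorial N = primorial (N - 1)"
        unfolding primorial_def by simp
      also have "\<dots> \<le> 4 ^ (N - 1)"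
        using less.IH False by simp
      also have "\<dots> \<le> 4 ^ N" by simp
      finally show ?thesis .
    next
      case False
      then obtain n where N: "N = 2 * n + 1" by (metis oddE)
      have split: "{p. prime p \<and> p \<le> N} = {p. prime p \<and> p \<le> n + 1} \<union> {p. prime p \<and> n + 1 < p \<and> p \<le> 2 * n + 1}"
        using N by auto
      have "primorial N = primorial (n + 1) * \<Prod>{p. prime p \<and> n + 1 < p \<and> p \<le> 2 * n + 1}"
        unfolding primorial_def split by (subst prod.union_disjoint) auto
      also have "\<dots> \<le> 4 ^ (n + 1) * 4 ^ n"
        using less.IH[of "n + 1"] N \<open>\<not> N \<le> 2\<close> prod_primes_between_le[of n] by (intro mult_le_mono) auto
      also have "\<dots> = 4 ^ N"
        using N by (simp add: power_add[symmetric])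
      finally show ?thesis .
    qed
  qed
qed

lemma prod_nth_primes_le_4_pow: "(\<Prod>i\<le>k. nth_prime i) \<le> 4 ^ nth_prime k"
proof -
  have "(\<Prod>i\<le>k. nth_prime i) = primorial (nth_prime k)"
    unfolding primorial_def primes_le_nth_prime by (simp add: prod.reindex inj_on_def)
  then show ?thesis using primorial_le_4_pow by simp
qed

subsection \<open>Chebyshev's lower bound\<close>

lemma multiplicity_Suc_le:
  assumes "prime (p :: nat)"
  shows "multiplicity p (Suc n) \<le> n"
proof -
  have "p ^ multiplicity p (Suc n) \<le> Suc n"
    by (rule dvd_imp_le[OF multiplicity_dvd]) simp
  moreover have "2 ^ multiplicity p (Suc n) \<le> p ^ multiplicity p (Suc n)"
    using prime_ge_2_nat[OF assms] by (intro power_mono) auto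
  moreover have "multiplicity p (Suc n) < 2 ^ multiplicity p (Suc n)"
    by (rule less_exp)
  ultimately show ?thesis by linarith
qed

lemma multiplicity_Suc_eq_card_prime_powers:
  assumes "prime (p :: nat)"
  shows "(\<Sum>k=1..n. if p ^ k dvd Suc n then 1 else 0 :: nat) = multiplicity p (Suc n)"
proof -
  have "p \<noteq> Suc 0" using prime_gt_1_nat[OF assms] by simp
  then have pow_dvd: "p ^ k dvd Suc n \<longleftrightarrow> k \<le> multiplicity p (Suc n)" for k
    using power_dvd_iff_le_multiplicity[of "Suc n" p] by simp
  have "k \<in> {k\<in>{1..n}. p ^ k dvd Suc n} \<longleftrightarrow> k \<in> {1..multiplicity p (Suc n)}" for k
    unfolding mem_Collect_eq atLeastAtMost_iff pow_dvd using multiplicity_Suc_le[OF assms, of n] by arith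
  then have "{k\<in>{1..n}. p ^ k dvd Suc n} = {1..multiplicity p (Suc n)}" by blast
  then show ?thesis by (simp add: sum.If_cases Int_def)
qed

lemma legendre_multiplicity_fact:
  assumes "prime (p :: nat)"
  shows "multiplicity p (fact n) = (\<Sum>k=1..n. n div p ^ k)"
proof (induction n)
  case 0
  then show ?case by simp
next
  case (Suc n)
  have p1: "p > 1" using prime_gt_1_nat[OF assms] .
  have "multiplicity p (fact (Suc n) :: nat) = multiplicity p (Suc n * fact n)"
    by simp
  also have "\<dots> = multiplicity p (Suc n) + multiplicity p (fact n :: nat)"
    using assms by (intro prime_elem_multiplicity_mult_distrib) auto
  finally have fact_Suc: "multiplicity p (fact (Suc n) :: nat) = multiplicity p (Suc n) + multiplicity p (fact n :: nat)" .
  have "Suc n < 2 ^ Suc n" by (rule less_exp)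
  also have "\<dots> \<le> p ^ Suc n" using p1 by (intro power_mono) auto
  finally have last_zero: "Suc n div p ^ Suc n = 0" by simp
  have div_Suc': "Suc n div q = n div q + (if q dvd Suc n then 1 else 0)" if "q > 0" for q :: nat
    using that by (auto simp: div_Suc dvd_eq_mod_eq_0)
  have "(\<Sum>k=1..Suc n. Suc n div p ^ k) = (\<Sum>k=1..n. Suc n div p ^ k) + Suc n div p ^ Suc n"
    by simp
  also have "\<dots> = (\<Sum>k=1..n. n div p ^ k + (if p ^ k dvd Suc n then 1 else 0))"
    using last_zero p1 by (simp add: div_Suc')
  also have "\<dots> = (\<Sum>k=1..n. n div p ^ k) + (\<Sum>k=1..n. if p ^ k dvd Suc n then 1 else 0 :: nat)"
    by (simp only: sum.distrib)
  also have "\<dots> = (\<Sum>k=1..n. n div p ^ k) + multiplicity p (Suc n)"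
    by (simp only: multiplicity_Suc_eq_card_prime_powers[OF assms])
  finally show ?case using fact_Suc Suc.IH by simp
qed

lemma div_double_le: "(2 * n) div (q :: nat) \<le> 2 * (n div q) + 1"
proof (cases "q = 0")
  case False
  have "q * (n div q) + n mod q = n" by simp
  then have "2 * n = q * (2 * (n div q)) + 2 * (n mod q)"
    by (metis distrib_left mult.left_commute)
  moreover have "2 * (n mod q) < 2 * q" using False by simp
  ultimately have "2 * n < q * (2 * (n div q) + 2)" by (simp add: algebra_simps)
  then have "(2 * n) div q < 2 * (n div q) + 2"
    using False by (simp add: div_less_iff_less_mult mult.commute)
  then show ?thesis by simp
qed simp

lemma double_div_le: "2 * (n div (q :: nat)) \<le> (2 * n) div q"
proof (cases "q = 0")
  case False
  have "q * (n div q) \<le> n" by (rule times_div_less_eq_dividend)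
  then have "2 * (n div q) * q \<le> 2 * n" by (simp add: algebra_simps)
  then show ?thesis using False by (simp add: less_eq_div_iff_mult_less_eq)
qed simp

lemma multiplicity_central_binomial:
  assumes "prime (p :: nat)"
  shows "multiplicity p ((2 * n) choose n) = (\<Sum>k=1..2*n. (2 * n) div p ^ k - 2 * (n div p ^ k))"
proof -
  define C where "C = (2 * n) choose n"
  define v where "v = multiplicity p C"
  have p1: "p > 1" using prime_gt_1_nat[OF assms] .
  have fact_eq: "fact (2 * n) = C * (fact n * fact n)"
    using binomial_fact_lemma[of n "2 * n"] unfolding C_def by (simp add: algebra_simps)
  have "C \<noteq> 0" unfolding C_def by simp
  have "multiplicity p (fact (2 * n) :: nat) = v + (multiplicity p (fact n :: nat) + multiplicity p (fact n :: nat))"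
    unfolding fact_eq v_def using assms \<open>C \<noteq> 0\<close> by (simp add: prime_elem_multiplicity_mult_distrib)
  then have legendre: "v + 2 * (\<Sum>k=1..n. n div p ^ k) = (\<Sum>k=1..2*n. (2 * n) div p ^ k)"
    using legendre_multiplicity_fact[OF assms, of n] legendre_multiplicity_fact[OF assms, of "2 * n"] by simp
  have "\<forall>k\<in>{1..2*n} - {1..n}. n div p ^ k = 0"
  proof
    fix k assume k: "k \<in> {1..2*n} - {1..n}"
    have "n < 2 ^ n" by (rule less_exp)
    also have "(2 :: nat) ^ n \<le> 2 ^ k" using k by (intro power_increasing) auto
    also have "\<dots> \<le> p ^ k" using p1 by (intro power_mono) auto
    finally show "n div p ^ k = 0" by simp
  qed
  then have extend: "(\<Sum>k=1..n. n div p ^ k) = (\<Sum>k=1..2*n. n div p ^ k)"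
    by (intro sum.mono_neutral_left) auto
  have "(\<Sum>k=1..2*n. (2 * n) div p ^ k - 2 * (n div p ^ k)) + (\<Sum>k=1..2*n. 2 * (n div p ^ k))
     = (\<Sum>k=1..2*n. (2 * n) div p ^ k)"
    by (subst sum.distrib[symmetric]) (intro sum.cong, auto simp: double_div_le)
  moreover have "(\<Sum>k=1..2*n. 2 * (n div p ^ k)) = 2 * (\<Sum>k=1..2*n. n div p ^ k)"
    by (rule sum_distrib_left[symmetric])
  ultimately show ?thesis
    using legendre[unfolded extend] unfolding v_def C_def by linarith
qed

text \<open>Each term in \<open>multiplicity_central_binomial\<close> is \<open>0\<close> or \<open>1\<close>, and it is \<open>0\<close> once \<open>p\<^sup>k > 2n\<close>.\<close>
lemma prime_power_multiplicity_central_binomial_le: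
  assumes "prime (p :: nat)" "n > 0"
  shows "p ^ multiplicity p ((2 * n) choose n) \<le> 2 * n"
proof -
  define v where "v = multiplicity p ((2 * n) choose n)"
  have p1: "p > 1" using prime_gt_1_nat[OF assms(1)] .
  have "v < K" if K: "2 * n < p ^ K" for K
  proof -
    have "v \<le> (\<Sum>k=1..2*n. if p ^ k \<le> 2 * n then 1 else 0 :: nat)"
      unfolding v_def multiplicity_central_binomial[OF assms(1)]
    proof (intro sum_mono)
      fix k
      show "(2 * n) div p ^ k - 2 * (n div p ^ k) \<le> (if p ^ k \<le> 2 * n then 1 else 0)"
        using div_double_le[of n "p ^ k"] by (cases "p ^ k \<le> 2 * n") auto
    qed
    also have "\<dots> = card {k\<in>{1..2*n}. p ^ k \<le> 2 * n}"
      by (simp add: sum.If_cases Int_def)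
    also have "\<dots> \<le> card {1..<K}"
    proof (rule card_mono)
      show "{k\<in>{1..2*n}. p ^ k \<le> 2 * n} \<subseteq> {1..<K}"
      proof
        fix k assume "k \<in> {k\<in>{1..2*n}. p ^ k \<le> 2 * n}"
        then have "k \<ge> 1" "p ^ k < p ^ K" using K by auto
        then show "k \<in> {1..<K}" using p1 by (simp add: power_strict_increasing_iff)
      qed
    qed simp
    also have "\<dots> < K" using K assms(2) by (cases K) auto
    finally show ?thesis .
  qed
  then have "\<not> 2 * n < p ^ v"
    by blast
  then show ?thesis
    unfolding v_def by simp
qed

definition prime_pi :: "nat \<Rightarrow> nat" where
  "prime_pi x = card {p. prime p \<and> p \<le> x}"

lemma central_binomial_le_pow_prime_pi:
  assumes "n > 0"
  shows "(2 * n) choose n \<le> (2 * n) ^ prime_pi (2 * n)"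
proof -
  define C where "C = (2 * n) choose n"
  have "C \<noteq> 0" unfolding C_def by simp
  have sub: "prime_factors C \<subseteq> {p. prime p \<and> p \<le> 2 * n}"
  proof
    fix p assume p: "p \<in> prime_factors C"
    have "fact n * fact n * C = (fact (2 * n) :: nat)"
      using binomial_fact_lemma[of n "2 * n"] unfolding C_def by simp
    then have "C dvd fact (2 * n)"
      by (metis dvd_triv_right)
    then have "p dvd fact (2 * n)"
      using p by (auto intro: dvd_trans)
    then show "p \<in> {p. prime p \<and> p \<le> 2 * n}"
      using p prime_dvd_fact_iff by auto
  qed
  have "C = (\<Prod>p\<in>prime_factors C. p ^ multiplicity p C)"
    using prod_prime_factors[OF \<open>C \<noteq> 0\<close>] by simp
  also have "\<dots> \<le> (\<Prod>p\<in>prime_factors C. 2 * n)"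
    using prime_power_multiplicity_central_binomial_le[OF _ assms] unfolding C_def
    by (intro prod_mono) auto
  also have "\<dots> = (2 * n) ^ card (prime_factors C)"
    by simp
  also have "\<dots> \<le> (2 * n) ^ prime_pi (2 * n)"
    unfolding prime_pi_def using assms sub by (intro power_increasing card_mono) auto
  finally show ?thesis unfolding C_def .
qed

lemma prime_pi_lower_bound:
  assumes "n > 0"
  shows "real n * ln 4 - ln (2 * real n) \<le> real (prime_pi (2 * n)) * ln (2 * real n)"
proof -
  have "4 ^ n / (2 * real n) \<le> real ((2 * n) choose n)"
    using central_binomial_lower_bound[OF assms] .
  also have "\<dots> \<le> (2 * real n) ^ prime_pi (2 * n)"
    using central_binomial_le_pow_prime_pi[OF assms] by (metis of_nat_le_iff of_nat_mult of_nat_numeral of_nat_power)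
  finally have "ln (4 ^ n / (2 * real n)) \<le> ln ((2 * real n) ^ prime_pi (2 * n))"
    using assms by (intro ln_mono) auto
  moreover have "ln ((2 * real n) ^ prime_pi (2 * n)) = real (prime_pi (2 * n)) * ln (2 * real n)"
    using assms by (intro ln_realpow)
  moreover have "ln (4 ^ n / (2 * real n)) = real n * ln 4 - ln (2 * real n)"
    using assms by (simp add: ln_div ln_realpow)
  ultimately show ?thesis by linarith
qed

lemma ln_fact_ge: "real n * ln (real n) - real n \<le> ln (fact n)"
proof (cases "n = 0")
  case False
  define f where "f = (\<lambda>k. real n ^ k /\<^sub>R fact k)"
  have "f sums exp (real n)"
    unfolding f_def by (rule exp_converges)
  then have "sum f {n} \<le> suminf f"
    by (intro sum_le_suminf) (auto simp: sums_summable f_def)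
  then have "real n ^ n / fact n \<le> exp (real n)"
    using sums_unique[OF \<open>f sums exp (real n)\<close>] by (simp add: f_def divide_inverse mult.commute)
  then have "ln (real n ^ n / fact n) \<le> ln (exp (real n))"
    using False by (intro ln_mono) auto
  then show ?thesis
    using False by (simp add: ln_div ln_realpow)
qed simp

lemma one_le_ln_4: "1 \<le> ln (4 :: real)"
  using exp_le by (subst ln_ge_iff) auto

text \<open>From \<open>(k+1)! \<le> \<Prod>\<^sub>i\<^sub>\<le>\<^sub>k p\<^sub>i \<le> 4\<^bsup>p\<^sub>k\<^esup>\<close>.\<close>
lemma nth_prime_lower_bound: "real (k + 1) * ln (real (k + 1)) - real (k + 1) \<le> real (nth_prime k) * ln 4"
proof -
  have "fact (k + 1) = (\<Prod>i\<le>k. (i + 1 :: nat))"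
    by (induction k) (simp_all add: algebra_simps)
  also have "\<dots> \<le> (\<Prod>i\<le>k. nth_prime i)"
  proof (intro prod_mono)
    fix i
    show "0 \<le> i + 1 \<and> i + 1 \<le> nth_prime i"
      using nth_prime_ge[of i] by simp
  qed
  also have "\<dots> \<le> 4 ^ nth_prime k"
    by (rule prod_nth_primes_le_4_pow)
  finally have "(fact (k + 1) :: real) \<le> 4 ^ nth_prime k"
    by (metis of_nat_fact of_nat_le_iff of_nat_numeral of_nat_power)
  then have "ln (fact (k + 1)) \<le> real (nth_prime k) * ln 4"
    using ln_mono[of "fact (k + 1)" "4 ^ nth_prime k"] by (simp add: ln_realpow)
  then show ?thesis using ln_fact_ge[of "k + 1"] by linarith
qed

text \<open>Take \<open>n = 8(k+1)a\<close> with \<open>a = \<lceil>ln(k+1)\<rceil> + 1\<close>: Chebyshev's bound gives \<open>\<pi>(2n) \<ge> k+1\<close>.\<close>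
lemma nth_prime_upper_bound: "real (nth_prime k) \<le> 16 * real (k + 1) * (ln (real (k + 1)) + 2)"
proof -
  define x where "x = real (k + 1)"
  have x1: "x \<ge> 1" unfolding x_def by simp
  define a where "a = nat \<lceil>ln x\<rceil> + 1"
  have a1: "real a \<ge> 1" unfolding a_def by simp
  have ax: "ln x + 1 \<le> real a" "real a \<le> ln x + 2"
    unfolding a_def using x1 ceiling_correct[of "ln x"] by auto
  define n where "n = 8 * (k + 1) * a"
  have n0: "n > 0" unfolding n_def a_def by simp
  have rn: "real n = 8 * x * real a" unfolding n_def x_def by simp
  have "k + 1 \<le> prime_pi (2 * n)"
  proof (rule ccontr)
    assume "\<not> k + 1 \<le> prime_pi (2 * n)"
    then have "real (prime_pi (2 * n)) \<le> real k" by simp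
    moreover have "ln (2 * real n) \<ge> 0" using n0 by simp
    ultimately have "real n * ln 4 - ln (2 * real n) \<le> real k * ln (2 * real n)"
      using prime_pi_lower_bound[OF n0] by (meson mult_right_mono order_trans)
    then have A: "real n * ln 4 \<le> x * ln (2 * real n)"
      unfolding x_def by (simp add: algebra_simps)
    have "ln (2 * real n) = ln 16 + ln x + ln (real a)"
      using x1 a1 by (simp add: rn ln_mult)
    also have "ln (16 :: real) = 4 * ln 2"
      using ln_realpow[of 2 4] by simp
    also have "\<dots> < 4" using ln_2_less_1 by simp
    finally have "ln (2 * real n) < 4 + (real a - 1) + (real a - 1)"
      using ax ln_le_minus_one[of "real a"] a1 by linarith
    then have "x * ln (2 * real n) < x * (4 * real a)"
      using x1 a1 by (intro mult_strict_left_mono) auto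
    moreover have "x * (4 * real a) < real n * ln 4"
      unfolding rn using one_le_ln_4 x1 a1 by (simp add: mult_less_le_imp_less mult_le_cancel_left1)
    ultimately show False using A by linarith
  qed
  then have "nth_prime k \<le> 2 * n"
    unfolding prime_pi_def by (rule nth_prime_le_if_card_ge[rotated 2]) auto
  then have "real (nth_prime k) \<le> 16 * x * real a"
    using rn by linarith
  also have "\<dots> \<le> 16 * x * (ln x + 2)"
    using ax x1 by (intro mult_left_mono) auto
  finally show ?thesis unfolding x_def .
qed

section \<open>Faces of \<open>\<Delta>\<^sub>n\<close> of maximal size\<close>

lemma prod_prime_factors_squarefree: "squarefree (k :: nat) \<Longrightarrow> \<Prod>(prime_factors k) = k"
proof -
  assume sqf: "squarefree k"
  then have "k \<noteq> 0" by (metis not_squarefree_0)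
  have "\<Prod>(prime_factors k) = (\<Prod>p\<in>prime_factors k. p ^ multiplicity p k)"
    using sqf \<open>k \<noteq> 0\<close> squarefree_factorial_semiring'[OF \<open>k \<noteq> 0\<close>] by (intro prod.cong) auto
  also have "\<dots> = k" using prod_prime_factors[OF \<open>k \<noteq> 0\<close>] by simp
  finally show ?thesis .
qed

lemma prime_factors_prod_primes:
  "finite \<sigma> \<Longrightarrow> \<forall>p\<in>\<sigma>. prime (p :: nat) \<Longrightarrow> prime_factors (\<Prod>\<sigma>) = \<sigma>"
proof -
  assume "finite \<sigma>" and primes: "\<forall>p\<in>\<sigma>. prime (p :: nat)"
  then have "prime_factors (prod id \<sigma>) = \<Union>((prime_factors \<circ> id) ` \<sigma>)"
    by (intro prime_factors_prod) auto
  also have "\<dots> = \<sigma>" using primes by (auto simp: prime_prime_factors)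
  finally show ?thesis by simp
qed

lemma squarefree_prod_primes: "\<forall>p\<in>\<sigma>. prime (p :: nat) \<Longrightarrow> squarefree (\<Prod>\<sigma>)"
proof -
  assume "\<forall>p\<in>\<sigma>. prime (p :: nat)"
  then have "squarefree (prod id \<sigma>)"
    by (intro squarefree_prod_coprime) (auto simp: primes_coprime squarefree_prime)
  then show ?thesis by simp
qed

lemma mem_Delta_iff: "\<sigma> \<in> Delta n \<longleftrightarrow> finite \<sigma> \<and> (\<forall>p\<in>\<sigma>. prime p) \<and> \<Prod>\<sigma> \<le> n"
proof
  assume "\<sigma> \<in> Delta n"
  then obtain k where k: "\<sigma> = prime_factors k" "1 \<le> k" "k \<le> n" "squarefree k"
    unfolding Delta_def by auto
  then show "finite \<sigma> \<and> (\<forall>p\<in>\<sigma>. prime p) \<and> \<Prod>\<sigma> \<le> n"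
    using prod_prime_factors_squarefree[OF k(4)] by auto
next
  assume \<sigma>: "finite \<sigma> \<and> (\<forall>p\<in>\<sigma>. prime p) \<and> \<Prod>\<sigma> \<le> n"
  then have "\<Prod>\<sigma> \<ge> 1"
    by (metis One_nat_def Suc_leI not_prime_0 prod_pos zero_less_iff_neq_zero)
  then show "\<sigma> \<in> Delta n"
    unfolding Delta_def using \<sigma> prime_factors_prod_primes squarefree_prod_primes
    by (intro CollectI exI[of _ "\<Prod>\<sigma>"]) auto
qed

lemma finite_Delta: "finite (Delta n)"
proof (rule finite_subset)
  show "Delta n \<subseteq> Pow {..n}"
  proof
    fix \<sigma> assume "\<sigma> \<in> Delta n"
    then obtain k where k: "\<sigma> = prime_factors k" "1 \<le> k" "k \<le> n"
      unfolding Delta_def by auto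
    then have "p \<le> n" if "p \<in> \<sigma>" for p
      using that by (meson dvd_imp_le in_prime_factors_imp_dvd order_trans zero_less_one less_le_trans)
    then show "\<sigma> \<in> Pow {..n}" by auto
  qed
qed simp

definition Delta_rank :: "nat \<Rightarrow> nat" where
  "Delta_rank n = Max (card ` Delta n)"

definition top_faces :: "nat \<Rightarrow> nat set set" where
  "top_faces n = {\<sigma> \<in> Delta n. card \<sigma> = Delta_rank n}"

lemma dimc_Delta: "dimc (Delta n) = Delta_rank n - 1"
  unfolding dimc_def Delta_rank_def ..

lemma fvec_Delta_dimc: "Delta_rank n \<ge> 1 \<Longrightarrow> fvec (Delta n) (dimc (Delta n)) = card (top_faces n)"
  unfolding fvec_def dimc_Delta top_faces_def by simp

definition first_primes :: "nat \<Rightarrow> nat set" where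
  "first_primes k = nth_prime ` {..<k}"

lemma prod_first_primes: "\<Prod>(first_primes k) = (\<Prod>i<k. nth_prime i)"
  unfolding first_primes_def by (simp add: prod.reindex inj_on_def)

lemma card_first_primes: "card (first_primes k) = k"
  unfolding first_primes_def by (simp add: card_image inj_on_def)

lemma finite_first_primes: "finite (first_primes k)"
  unfolding first_primes_def by simp

lemma first_primes_Suc: "first_primes (Suc k) = {q. prime q \<and> q \<le> nth_prime k}"
  unfolding first_primes_def primes_le_nth_prime lessThan_Suc_atMost ..

lemma card_le_Delta_rank: "\<sigma> \<in> Delta n \<Longrightarrow> card \<sigma> \<le> Delta_rank n"
  unfolding Delta_rank_def using finite_Delta by (intro Max_ge) auto

lemma Delta_rank_ge: "(\<Prod>i<k. nth_prime i) \<le> n \<Longrightarrow> k \<le> Delta_rank n"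
  using card_le_Delta_rank[of "first_primes k" n] mem_Delta_iff[of "first_primes k"] prod_first_primes
    card_first_primes finite_first_primes prime_nth_prime by (auto simp: first_primes_def)

lemma less_prod_first_primes: "n < (\<Prod>i<Delta_rank n + 1. nth_prime i)"
  using Delta_rank_ge[of "Delta_rank n + 1" n] by force

lemma top_faces_nonempty: "n \<ge> 1 \<Longrightarrow> top_faces n \<noteq> {}"
proof -
  assume "n \<ge> 1"
  then have "{} \<in> Delta n" using mem_Delta_iff by simp
  then have "Delta_rank n \<in> card ` Delta n"
    unfolding Delta_rank_def using finite_Delta by (intro Max_in) auto
  then show ?thesis unfolding top_faces_def by auto
qed

lemma finite_top_faces: "finite (top_faces n)"
  unfolding top_faces_def using finite_Delta by simp

lemma prod_first_primes_le: "n \<ge> 1 \<Longrightarrow> (\<Prod>i<Delta_rank n. nth_prime i) \<le> n"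
proof -
  assume "n \<ge> 1"
  then obtain \<sigma> where "\<sigma> \<in> top_faces n" using top_faces_nonempty by auto
  then have "\<sigma> \<in> Delta n" "card \<sigma> = Delta_rank n" unfolding top_faces_def by auto
  then show ?thesis
    using prod_nth_primes_le_prod[of \<sigma> "Delta_rank n"] mem_Delta_iff[of \<sigma> n] by auto
qed

lemma eventually_Delta_rank_ge: "eventually (\<lambda>n. K \<le> Delta_rank n) sequentially"
  unfolding eventually_sequentially using Delta_rank_ge by blast

lemma card_subsets_card_le:
  assumes "finite B" "card B \<ge> 1"
  shows "card {A. A \<subseteq> B \<and> card A \<le> J} \<le> (J + 1) * card B ^ J"
proof -
  have split: "{A. A \<subseteq> B \<and> card A \<le> J} = (\<Union>j\<in>{..J}. {A. A \<subseteq> B \<and> card A = j})"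
    by auto
  have "card {A. A \<subseteq> B \<and> card A \<le> J} \<le> (\<Sum>j\<in>{..J}. card {A. A \<subseteq> B \<and> card A = j})"
    unfolding split by (rule card_UN_le) simp
  also have "\<dots> = (\<Sum>j\<in>{..J}. card B choose j)"
    using assms(1) by (simp add: n_subsets)
  also have "\<dots> \<le> (\<Sum>j\<in>{..J}. card B ^ J)"
  proof (rule sum_mono)
    fix j assume j: "j \<in> {..J}"
    have "card B choose j \<le> card B ^ j"
      by (cases "j \<le> card B") (simp_all add: binomial_le_pow binomial_eq_0)
    also have "\<dots> \<le> card B ^ J"
      using j assms(2) by (intro power_increasing) auto
    finally show "card B choose j \<le> card B ^ J" .
  qed
  finally show ?thesis by simp
qed

text \<open>At most \<open>t\<close> elements of a set of integers \<open>> P\<close> can lie in \<open>(P, P + t]\<close>.\<close>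
lemma prod_ge_pow_one_plus:
  fixes E :: "nat set"
  assumes fin: "finite E" and gt: "\<forall>e\<in>E. e > P" and P1: "P \<ge> 1"
  shows "real P ^ card E * (1 + real t / real P) ^ (card E - t) \<le> real (\<Prod>E)"
proof -
  define E' where "E' = {e\<in>E. e > P + t}"
  have fin': "finite E'" unfolding E'_def using fin by simp
  have "E - E' \<subseteq> {P+1..P+t}" unfolding E'_def using gt by auto
  then have small: "card (E - E') \<le> t" using card_mono[of "{P+1..P+t}"] by simp
  have sub: "E' \<subseteq> E" unfolding E'_def by auto
  have cE: "card E = card E' + card (E - E')"
    using card_Diff_subset[OF fin' sub] card_mono[OF fin sub] by simp
  have "real (\<Prod>E) = real (\<Prod>E') * real (\<Prod>(E - E'))"
    using fin sub by (simp add: prod.subset_diff[of E' E] algebra_simps)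
  also have "real (\<Prod>E') \<ge> real (P + t) ^ card E'"
  proof -
    have "(\<Prod>e\<in>E'. P + t) \<le> \<Prod>E'" unfolding E'_def by (intro prod_mono) auto
    then show ?thesis by (metis of_nat_le_iff of_nat_power prod_constant)
  qed
  moreover have "real (\<Prod>(E - E')) \<ge> real P ^ card (E - E')"
  proof -
    have "(\<Prod>e\<in>E - E'. P) \<le> \<Prod>(E - E')" using gt by (intro prod_mono) auto
    then show ?thesis by (metis of_nat_le_iff of_nat_power prod_constant)
  qed
  ultimately have lower: "real (\<Prod>E) \<ge> real (P + t) ^ card E' * real P ^ card (E - E')"
    by (metis (no_types, lifting) mult_mono of_nat_0_le_iff zero_le_power)
  have shift: "real (P + t) = real P * (1 + real t / real P)" using P1 by (simp add: field_simps)
  have "real (P + t) ^ card E' * real P ^ card (E - E')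
      = (real P ^ card E' * real P ^ card (E - E')) * (1 + real t / real P) ^ card E'"
    unfolding shift power_mult_distrib by (simp add: mult_ac)
  also have "real P ^ card E' * real P ^ card (E - E') = real P ^ card E"
    using cE by (simp add: power_add)
  finally have "real (P + t) ^ card E' * real P ^ card (E - E') = real P ^ card E * (1 + real t / real P) ^ card E'" .
  moreover have "(1 + real t / real P) ^ (card E - t) \<le> (1 + real t / real P) ^ card E'"
    using cE small by (intro power_increasing) auto
  then have "real P ^ card E * (1 + real t / real P) ^ (card E - t) \<le> real P ^ card E * (1 + real t / real P) ^ card E'"
    by (rule mult_left_mono) simp
  ultimately show ?thesis using lower by linarith
qed

lemma le_of_one_plus_pow_le_exp:
  fixes P L :: real
  assumes "P \<ge> 1" and h: "(1 + real t / P) ^ t \<le> exp L"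
  shows "real t \<le> sqrt (2 * P * L) + 2 * L"
proof (cases "t = 0")
  case True
  have "1 \<le> exp L" using h True by simp
  then show ?thesis using True assms by simp
next
  case False
  define x where "x = real t / P"
  have "x > 0" unfolding x_def using False assms by simp
  have "ln ((1 + x) ^ t) \<le> L"
    using h \<open>x > 0\<close> ln_mono[of "(1 + x) ^ t" "exp L"] unfolding x_def by simp
  then have "real t * ln (1 + x) \<le> L"
    using \<open>x > 0\<close> by (simp add: ln_realpow)
  moreover have "x / (1 + x) \<le> ln (1 + x)"
    using ln_add1_ge[of x] \<open>x > 0\<close> by (simp add: add.commute)
  ultimately have C: "real t * (x / (1 + x)) \<le> L"
    by (meson mult_left_mono of_nat_0_le_iff order_trans)
  show ?thesis
  proof (cases "x \<le> 1")
    case True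
    have "x / 2 \<le> x / (1 + x)" using True \<open>x > 0\<close> by (intro divide_left_mono) auto
    then have "real t * (x / 2) \<le> L" using C by (meson mult_left_mono of_nat_0_le_iff order_trans)
    then have "real t * real t \<le> 2 * P * L" unfolding x_def using assms by (simp add: field_simps)
    then have "real t \<le> sqrt (2 * P * L)" using real_le_rsqrt by (metis power2_eq_square)
    moreover have "L \<ge> 0" using C \<open>x > 0\<close> by (smt (verit) divide_nonneg_pos mult_nonneg_nonneg of_nat_0_le_iff)
    ultimately show ?thesis by simp
  next
    case False
    have "1 / 2 \<le> x / (1 + x)" using False by (simp add: field_simps)
    then have "real t * (1 / 2) \<le> L" using C by (meson mult_left_mono of_nat_0_le_iff order_trans)
    moreover have "0 \<le> sqrt (2 * P * L)" using calculation assms by simp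
    ultimately show ?thesis by linarith
  qed
qed

lemma prod_mult_prod_Diff_swap:
  fixes A B :: "'a set" and f :: "'a \<Rightarrow> 'b :: comm_monoid_mult"
  assumes "finite A" "finite B"
  shows "prod f A * prod f (B - A) = prod f B * prod f (A - B)"
proof -
  have "prod f A * prod f (B - A) = prod f (A \<union> (B - A))"
    using assms by (subst prod.union_disjoint) auto
  also have "A \<union> (B - A) = B \<union> (A - B)" by auto
  also have "prod f (B \<union> (A - B)) = prod f B * prod f (A - B)"
    using assms by (subst prod.union_disjoint) auto
  finally show ?thesis .
qed

lemma card_Diff_swap:
  assumes "finite A" "finite B" "card A = card B"
  shows "card (A - B) = card (B - A)"
  using assms by (simp add: card_Diff_subset_Int Int_commute)

lemma top_face_elem_less:
  assumes "Delta_rank n \<ge> 1" "\<sigma> \<in> top_faces n" "e \<in> \<sigma>"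
  shows "e < nth_prime (Delta_rank n - 1) * nth_prime (Delta_rank n)"
proof -
  define m where "m = Delta_rank n"
  have "finite \<sigma>" "\<forall>p\<in>\<sigma>. prime p" "\<Prod>\<sigma> \<le> n" "card \<sigma> = m"
    using assms(2) mem_Delta_iff unfolding top_faces_def m_def by auto
  define Y where "Y = (\<Prod>i<m - 1. nth_prime i)"
  have "Y \<le> \<Prod>(\<sigma> - {e})"
    unfolding Y_def using \<open>finite \<sigma>\<close> \<open>\<forall>p\<in>\<sigma>. prime p\<close> \<open>card \<sigma> = m\<close> assms(3)
    by (intro prod_nth_primes_le_prod) auto
  moreover have "e * \<Prod>(\<sigma> - {e}) = \<Prod>\<sigma>"
    using \<open>finite \<sigma>\<close> assms(3) by (simp add: prod.remove)
  ultimately have "e * Y \<le> n"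
    using \<open>\<Prod>\<sigma> \<le> n\<close> by (metis dual_order.trans mult_le_mono2)
  also have "n < (\<Prod>i<m + 1. nth_prime i)"
    unfolding m_def by (rule less_prod_first_primes)
  also have "\<dots> = (nth_prime (m - 1) * nth_prime m) * Y"
    unfolding Y_def using assms(1) unfolding m_def[symmetric] by (cases m) auto
  finally have "e * Y < (nth_prime (m - 1) * nth_prime m) * Y" .
  then show ?thesis
    unfolding m_def by simp
qed

text \<open>A top face \<open>\<sigma>\<close> trades the \<open>j\<close> primes of \<open>Q - \<sigma>\<close>, all \<open>\<le> P\<close>, for the \<open>j\<close> primes
  of \<open>\<sigma> - Q\<close>, all \<open>> P\<close>; as \<open>\<Prod>\<sigma> \<le> n < p\<^sub>m \<Prod>Q\<close>, the gain must stay below \<open>p\<^sub>m\<close>.\<close>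
lemma one_plus_pow_less_nth_prime:
  assumes m: "Delta_rank n \<ge> 2" and \<sigma>: "\<sigma> \<in> top_faces n"
  defines "Q \<equiv> first_primes (Delta_rank n)" and "P \<equiv> nth_prime (Delta_rank n - 1)"
  shows "(1 + real t / real P) ^ (card (\<sigma> - Q) - t) < real (nth_prime (Delta_rank n))"
proof -
  define j where "j = card (\<sigma> - Q)"
  have "finite \<sigma>" "\<forall>p\<in>\<sigma>. prime p" "\<Prod>\<sigma> \<le> n" "card \<sigma> = Delta_rank n"
    using \<sigma> mem_Delta_iff unfolding top_faces_def by auto
  have "finite Q" "card Q = Delta_rank n"
    unfolding Q_def by (simp_all add: finite_first_primes card_first_primes)
  have "P \<ge> 1" unfolding P_def using nth_prime_ge[of "Delta_rank n - 1"] by simp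
  have Q: "Q = {q. prime q \<and> q \<le> P}"
    unfolding Q_def P_def using m first_primes_Suc[of "Delta_rank n - 1"] by (simp add: Suc_diff_Suc)
  have "card (Q - \<sigma>) = j"
    unfolding j_def using card_Diff_swap[OF \<open>finite \<sigma>\<close> \<open>finite Q\<close>] \<open>card \<sigma> = _\<close> \<open>card Q = _\<close> by simp
  then have "\<Prod>(Q - \<sigma>) \<le> P ^ j"
    using Q prod_mono[of "Q - \<sigma>" id "\<lambda>_. P"] by simp
  then have upper: "real (\<Prod>(Q - \<sigma>)) \<le> real P ^ j"
    by (metis of_nat_le_iff of_nat_power)
  have lower: "real P ^ j * (1 + real t / real P) ^ (j - t) \<le> real (\<Prod>(\<sigma> - Q))"
    unfolding j_def using \<open>finite \<sigma>\<close> \<open>\<forall>p\<in>\<sigma>. prime p\<close> Q \<open>P \<ge> 1\<close>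
    by (intro prod_ge_pow_one_plus) auto
  have "0 < real (\<Prod>Q)"
    unfolding Q_def prod_first_primes using prime_nth_prime by (simp add: prime_gt_0_nat prod_pos)
  have "n < \<Prod>Q * nth_prime (Delta_rank n)"
    using less_prod_first_primes[of n] unfolding Q_def prod_first_primes by simp
  then have n_less: "real n < real (\<Prod>Q) * real (nth_prime (Delta_rank n))"
    by (metis of_nat_less_iff of_nat_mult)
  have "real P ^ j * (1 + real t / real P) ^ (j - t) * real (\<Prod>Q) \<le> real (\<Prod>(\<sigma> - Q)) * real (\<Prod>Q)"
    using lower \<open>0 < real (\<Prod>Q)\<close> by (intro mult_right_mono) auto
  also have "\<dots> = real (\<Prod>\<sigma>) * real (\<Prod>(Q - \<sigma>))"
    using prod_mult_prod_Diff_swap[OF \<open>finite \<sigma>\<close> \<open>finite Q\<close>, of "\<lambda>x. x"]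
    by (metis of_nat_mult mult.commute)
  also have "\<dots> \<le> real n * real P ^ j"
  proof (rule mult_mono)
    show "real (\<Prod>\<sigma>) \<le> real n"
      using \<open>\<Prod>\<sigma> \<le> n\<close> by (simp only: of_nat_le_iff)
  qed (use upper in \<open>simp_all only: of_nat_0_le_iff\<close>)
  also have "\<dots> < real (\<Prod>Q) * real (nth_prime (Delta_rank n)) * real P ^ j"
    using n_less \<open>P \<ge> 1\<close> by (intro mult_strict_right_mono) auto
  finally have "real P ^ j * ((1 + real t / real P) ^ (j - t) * real (\<Prod>Q))
      < real P ^ j * (real (nth_prime (Delta_rank n)) * real (\<Prod>Q))"
    by (simp add: mult_ac)
  then have "(1 + real t / real P) ^ (j - t) * real (\<Prod>Q) < real (nth_prime (Delta_rank n)) * real (\<Prod>Q)"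
    using \<open>P \<ge> 1\<close> by (simp add: mult_less_cancel_left)
  then show ?thesis
    unfolding j_def using \<open>0 < real (\<Prod>Q)\<close> by simp
qed

lemma card_top_face_Diff_le:
  assumes "Delta_rank n \<ge> 2" and "\<sigma> \<in> top_faces n"
  defines "P \<equiv> real (nth_prime (Delta_rank n - 1))" and "L \<equiv> ln (real (nth_prime (Delta_rank n)))"
  shows "real (card (\<sigma> - first_primes (Delta_rank n))) \<le> 2 * (sqrt (2 * P * L) + 2 * L) + 1"
proof -
  define j where "j = card (\<sigma> - first_primes (Delta_rank n))"
  define t where "t = j div 2"
  have "P \<ge> 1" unfolding P_def using nth_prime_ge[of "Delta_rank n - 1"] by simp
  have "(1 + real t / P) ^ t \<le> (1 + real t / P) ^ (j - t)"
    unfolding t_def using \<open>P \<ge> 1\<close> by (intro power_increasing) auto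
  also have "\<dots> < real (nth_prime (Delta_rank n))"
    using one_plus_pow_less_nth_prime[OF assms(1,2), of t] unfolding j_def P_def by simp
  also have "\<dots> = exp L"
    unfolding L_def using prime_gt_0_nat[OF prime_nth_prime] by simp
  finally have "real t \<le> sqrt (2 * P * L) + 2 * L"
    using \<open>P \<ge> 1\<close> by (intro le_of_one_plus_pow_le_exp) auto
  then have "2 * real t + 1 \<le> 2 * (sqrt (2 * P * L) + 2 * L) + 1"
    by simp
  moreover have "real j \<le> 2 * real t + 1"
    unfolding t_def by linarith
  ultimately show ?thesis
    unfolding j_def[symmetric] by (rule order_trans[rotated])
qed

text \<open>A set \<open>\<sigma>\<close> is determined by the pair \<open>(Q - \<sigma>, \<sigma> - Q)\<close>.\<close>
lemma card_le_of_small_Diffs: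
  assumes "finite Q" "finite B" "card Q \<ge> 1" "card B \<ge> 1"
    and small: "\<And>\<sigma>. \<sigma> \<in> S \<Longrightarrow> card (Q - \<sigma>) \<le> J \<and> card (\<sigma> - Q) \<le> J \<and> \<sigma> - Q \<subseteq> B"
  shows "card S \<le> (J + 1) ^ 2 * card Q ^ J * card B ^ J"
proof -
  define f where "f = (\<lambda>\<sigma>. (Q - \<sigma>, \<sigma> - Q))"
  define A1 where "A1 = {A. A \<subseteq> Q \<and> card A \<le> J}"
  define A2 where "A2 = {A. A \<subseteq> B \<and> card A \<le> J}"
  have "inj_on f S"
  proof (rule inj_onI)
    fix x y assume "f x = f y"
    then have "Q - x = Q - y" "x - Q = y - Q" unfolding f_def by auto
    moreover have "x = (Q - (Q - x)) \<union> (x - Q)" "y = (Q - (Q - y)) \<union> (y - Q)" by auto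
    ultimately show "x = y" by metis
  qed
  moreover have "f ` S \<subseteq> A1 \<times> A2"
    unfolding f_def A1_def A2_def using small by auto
  moreover have "finite (A1 \<times> A2)"
  proof -
    have "A1 \<subseteq> Pow Q" "A2 \<subseteq> Pow B"
      unfolding A1_def A2_def by blast+
    then show ?thesis
      using assms(1,2) by (meson finite_Pow_iff finite_subset finite_SigmaI)
  qed
  ultimately have "card S \<le> card (A1 \<times> A2)"
    by (metis card_image card_mono)
  also have "\<dots> = card A1 * card A2"
    by (simp add: card_cartesian_product)
  also have "\<dots> \<le> ((J + 1) * card Q ^ J) * ((J + 1) * card B ^ J)"
    unfolding A1_def A2_def using card_subsets_card_le assms(1-4) by (intro mult_le_mono) auto
  finally show ?thesis
    by (simp only: power2_eq_square mult_ac)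
qed

lemma card_top_faces_le:
  assumes m: "Delta_rank n \<ge> 2"
    and J: "\<And>\<sigma>. \<sigma> \<in> top_faces n \<Longrightarrow> card (\<sigma> - first_primes (Delta_rank n)) \<le> J"
  defines "N \<equiv> nth_prime (Delta_rank n - 1) * nth_prime (Delta_rank n)"
  shows "card (top_faces n) \<le> (J + 1) ^ 2 * Delta_rank n ^ J * N ^ J"
proof -
  define Q where "Q = first_primes (Delta_rank n)"
  have "finite Q" "card Q = Delta_rank n"
    unfolding Q_def by (simp_all add: finite_first_primes card_first_primes)
  have "N \<ge> 1"
    unfolding N_def using nth_prime_ge[of "Delta_rank n - 1"] nth_prime_ge[of "Delta_rank n"]
    by (simp add: one_le_mult_iff)
  have "card (Q - \<sigma>) \<le> J \<and> card (\<sigma> - Q) \<le> J \<and> \<sigma> - Q \<subseteq> {..<N}" if \<sigma>: "\<sigma> \<in> top_faces n" for \<sigma>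
  proof -
    have "finite \<sigma>" "card \<sigma> = Delta_rank n"
      using \<sigma> mem_Delta_iff unfolding top_faces_def by auto
    then have "card (Q - \<sigma>) = card (\<sigma> - Q)"
      using card_Diff_swap[OF \<open>finite Q\<close>] \<open>card Q = _\<close> by simp
    moreover have "\<sigma> - Q \<subseteq> {..<N}"
      using top_face_elem_less[OF _ \<sigma>] m unfolding N_def by auto
    ultimately show ?thesis
      using J[OF \<sigma>] unfolding Q_def by auto
  qed
  then show ?thesis
    using card_le_of_small_Diffs[of Q "{..<N}" "top_faces n" J] \<open>finite Q\<close> \<open>card Q = _\<close> \<open>N \<ge> 1\<close> m
    by simp
qed

section \<open>Asymptotics\<close>

definition prime_bound :: "real \<Rightarrow> real" where
  "prime_bound x = 16 * x * (ln x + 2)"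

definition prime_excess :: "real \<Rightarrow> real" where
  "prime_excess x = ln (ln (x / 2) - 1) - ln (ln 4)"

definition face_swap_bound :: "real \<Rightarrow> real" where
  "face_swap_bound x =
     2 * (sqrt (2 * prime_bound x * ln (prime_bound (x + 1))) + 2 * ln (prime_bound (x + 1))) + 1"

definition ln_top_faces_bound :: "real \<Rightarrow> real" where
  "ln_top_faces_bound x = 2 * ln (face_swap_bound x + 1)
     + face_swap_bound x * (ln x + ln (prime_bound x * prime_bound (x + 1)))"

definition decay_bound :: "real \<Rightarrow> real" where
  "decay_bound x = (x + 1) * ln (prime_bound (x + 1)) * ln (ln ((x + 1) * ln (prime_bound (x + 1)))) / ln (x * ln 2)"

lemma nth_prime_le_prime_bound: "real (nth_prime k) \<le> prime_bound (real (k + 1))"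
  unfolding prime_bound_def by (rule nth_prime_upper_bound)

lemma sum_ln_fact: "(\<Sum>i<m. ln (real (i + 1))) = ln (fact m)"
proof (induction m)
  case (Suc m)
  have "(\<Sum>i<Suc m. ln (real (i + 1))) = ln (fact m * real (m + 1))"
    using Suc by (simp add: ln_mult)
  then show ?case by (simp add: algebra_simps)
qed simp

text \<open>For \<open>i \<ge> m/2\<close> the bound \<open>p\<^sub>i \<ge> (i+1)(ln(i+1) - 1)/ln 4\<close> gains the factor \<open>(ln(m/2) - 1)/ln 4\<close>
  over the trivial bound \<open>p\<^sub>i \<ge> i + 1\<close>.\<close>
lemma sum_ln_nth_primes_ge:
  assumes m2: "m \<ge> 2" and large: "1 + ln 4 \<le> ln (real m / 2)"
  shows "0 \<le> prime_excess (real m)"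
    and "ln (fact m) + real m / 2 * prime_excess (real m) \<le> (\<Sum>i<m. ln (real (nth_prime i)))"
proof -
  define G where "G = prime_excess (real m)"
  have l4: "ln (4 :: real) \<ge> 1" by (rule one_le_ln_4)
  show G0: "0 \<le> prime_excess (real m)"
    unfolding prime_excess_def using large l4 by (simp add: ln_mono)
  have each: "ln (real (i + 1)) + (if m div 2 \<le> i then G else 0) \<le> ln (real (nth_prime i))" for i
  proof (cases "m div 2 \<le> i")
    case True
    define y where "y = real (i + 1)"
    have "y \<ge> real m / 2" unfolding y_def using True by linarith
    then have lym: "ln y \<ge> ln (real m / 2)" using m2 by (intro ln_mono) auto
    have ly: "ln y - 1 \<ge> ln 4" using lym large by linarith
    have "y * (ln y - 1) \<le> real (nth_prime i) * ln 4"
      using nth_prime_lower_bound[of i] unfolding y_def by (simp add: algebra_simps)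
    then have "y * (ln y - 1) / ln 4 \<le> real (nth_prime i)"
      using l4 by (simp add: field_simps)
    moreover have "y > 0" unfolding y_def by simp
    then have "y * (ln y - 1) > 0" using ly l4 by simp
    ultimately have "ln (y * (ln y - 1) / ln 4) \<le> ln (real (nth_prime i))"
      using l4 by (intro ln_mono) auto
    also have "ln (y * (ln y - 1) / ln 4) = ln y + ln (ln y - 1) - ln (ln 4)"
      using \<open>y > 0\<close> ly l4 by (simp add: ln_mult ln_div)
    finally have A: "ln y + ln (ln y - 1) - ln (ln 4) \<le> ln (real (nth_prime i))" .
    have "ln (ln (real m / 2) - 1) \<le> ln (ln y - 1)" using lym large l4 by (intro ln_mono) auto
    then show ?thesis using A True unfolding G_def prime_excess_def y_def by simp
  next
    case False
    have "real (i + 1) \<le> real (nth_prime i)" using nth_prime_ge[of i] by simp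
    then have "ln (real (i + 1)) \<le> ln (real (nth_prime i))" by (intro ln_mono) auto
    then show ?thesis using False by simp
  qed
  have "(\<Sum>i<m. ln (real (i + 1)) + (if m div 2 \<le> i then G else 0)) \<le> (\<Sum>i<m. ln (real (nth_prime i)))"
    using each by (intro sum_mono) auto
  moreover have "(\<Sum>i<m. ln (real (i + 1)) + (if m div 2 \<le> i then G else 0))
      = ln (fact m) + real (card {m div 2..<m}) * G"
  proof -
    have "(\<Sum>i<m. ln (real (i + 1)) + (if m div 2 \<le> i then G else 0))
        = ln (fact m) + (\<Sum>i<m. if m div 2 \<le> i then G else 0)"
      by (simp only: sum.distrib sum_ln_fact)
    also have "(\<Sum>i<m. if m div 2 \<le> i then G else 0) = real (card {i\<in>{..<m}. m div 2 \<le> i}) * G"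
      by (simp add: sum.If_cases Int_def)
    also have "{i\<in>{..<m}. m div 2 \<le> i} = {m div 2..<m}"
      by auto
    finally show ?thesis .
  qed
  moreover have "real m / 2 * G \<le> real (card {m div 2..<m}) * G"
    using G0 unfolding G_def by (intro mult_right_mono) auto
  ultimately show "ln (fact m) + real m / 2 * prime_excess (real m) \<le> (\<Sum>i<m. ln (real (nth_prime i)))"
    unfolding G_def by linarith
qed

lemma sum_ln_first_primes_le_ln: "n \<ge> 1 \<Longrightarrow> (\<Sum>i<Delta_rank n. ln (real (nth_prime i))) \<le> ln (real n)"
proof -
  assume "n \<ge> 1"
  have "(\<Sum>i<Delta_rank n. ln (real (nth_prime i))) = ln (\<Prod>i<Delta_rank n. real (nth_prime i))"
    using prime_nth_prime by (subst ln_prod) (auto simp: prime_gt_0_nat)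
  also have "\<dots> \<le> ln (real n)"
  proof (rule ln_mono)
    show "(\<Prod>i<Delta_rank n. real (nth_prime i)) \<le> real n"
      using prod_first_primes_le[OF \<open>n \<ge> 1\<close>] by (metis of_nat_le_iff of_nat_prod)
    show "0 < (\<Prod>i<Delta_rank n. real (nth_prime i))"
      using prime_nth_prime by (intro prod_pos) (simp add: prime_gt_0_nat)
  qed
  finally show ?thesis .
qed

lemma Delta_rank_ln_2_le_ln: "n \<ge> 1 \<Longrightarrow> real (Delta_rank n) * ln 2 \<le> ln (real n)"
proof -
  assume "n \<ge> 1"
  have "(\<Sum>i<Delta_rank n. ln 2) \<le> (\<Sum>i<Delta_rank n. ln (real (nth_prime i)))"
  proof (rule sum_mono)
    fix i
    have "2 \<le> real (nth_prime i)" using nth_prime_ge[of i] by simp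
    then show "ln 2 \<le> ln (real (nth_prime i))" by (intro ln_mono) auto
  qed
  then show ?thesis using sum_ln_first_primes_le_ln[OF \<open>n \<ge> 1\<close>] by simp
qed

lemma ln_le_Delta_rank_ln_nth_prime:
  assumes "n \<ge> 1"
  shows "ln (real n) \<le> real (Delta_rank n + 1) * ln (real (nth_prime (Delta_rank n)))"
proof -
  let ?m = "Delta_rank n"
  have "n \<le> (\<Prod>i<?m+1. nth_prime i)" using less_prod_first_primes[of n] by simp
  also have "\<dots> \<le> nth_prime ?m ^ (?m + 1)"
    using prod_mono[of "{..<?m+1}" nth_prime "\<lambda>_. nth_prime ?m"] by simp
  finally have "real n \<le> real (nth_prime ?m ^ (?m + 1))"
    by (simp only: of_nat_le_iff)
  then have "ln (real n) \<le> ln (real (nth_prime ?m ^ (?m + 1)))"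
    using assms by (intro ln_mono) auto
  also have "\<dots> = real (?m + 1) * ln (real (nth_prime ?m))"
    using prime_nth_prime[of ?m] by (simp only: of_nat_power, intro ln_realpow)
  finally show ?thesis .
qed

lemma card_top_face_Diff_le_face_swap_bound:
  assumes m2: "Delta_rank n \<ge> 2" and \<sigma>: "\<sigma> \<in> top_faces n"
  shows "real (card (\<sigma> - first_primes (Delta_rank n))) \<le> face_swap_bound (real (Delta_rank n))"
proof -
  let ?m = "Delta_rank n"
  define x where "x = real ?m"
  define P where "P = real (nth_prime (?m - 1))"
  define R where "R = real (nth_prime ?m)"
  have PB: "P \<le> prime_bound x"
    unfolding P_def x_def using nth_prime_le_prime_bound[of "?m - 1"] m2 by simp
  have RB: "R \<le> prime_bound (x + 1)"
    unfolding R_def x_def using nth_prime_le_prime_bound[of ?m] by (simp add: add.commute)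
  have "R \<ge> 2" "P \<ge> 2"
    unfolding R_def P_def using nth_prime_ge[of ?m] nth_prime_ge[of "?m - 1"] by simp_all
  then have lnR: "0 \<le> ln R" "ln R \<le> ln (prime_bound (x + 1))"
    using RB by (simp, intro ln_mono, auto)
  have "2 * P * ln R \<le> 2 * prime_bound x * ln (prime_bound (x + 1))"
    using PB lnR \<open>P \<ge> 2\<close> by (intro mult_mono) auto
  then have "sqrt (2 * P * ln R) \<le> sqrt (2 * prime_bound x * ln (prime_bound (x + 1)))"
    by (rule real_sqrt_le_mono)
  then have bound: "2 * (sqrt (2 * P * ln R) + 2 * ln R) + 1 \<le> face_swap_bound x"
    unfolding face_swap_bound_def using lnR(2) by (intro add_right_mono mult_left_mono add_mono) auto
  have "real (card (\<sigma> - first_primes ?m)) \<le> 2 * (sqrt (2 * P * ln R) + 2 * ln R) + 1"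
    using card_top_face_Diff_le[OF m2 \<sigma>] unfolding P_def R_def .
  then show ?thesis
    using bound unfolding x_def by (rule order_trans)
qed

lemma ln_card_top_faces_le:
  assumes n: "n \<ge> 1" and m2: "Delta_rank n \<ge> 2"
  shows "ln (real (card (top_faces n))) \<le> ln_top_faces_bound (real (Delta_rank n))"
proof -
  let ?m = "Delta_rank n"
  define x where "x = real ?m"
  have x2: "x \<ge> 2" unfolding x_def using m2 by simp
  define J where "J = nat \<lfloor>face_swap_bound x\<rfloor>"
  obtain \<sigma> where "\<sigma> \<in> top_faces n"
    using top_faces_nonempty[OF n] by auto
  then have "0 \<le> face_swap_bound x"
    using card_top_face_Diff_le_face_swap_bound[OF m2] unfolding x_def by (meson of_nat_0_le_iff order_trans)
  then have JB: "real J \<le> face_swap_bound x"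
    unfolding J_def by linarith
  define N where "N = nth_prime (?m - 1) * nth_prime ?m"
  have NB: "real N \<le> prime_bound x * prime_bound (x + 1)"
    unfolding N_def x_def using nth_prime_le_prime_bound[of "?m - 1"] nth_prime_le_prime_bound[of ?m] m2
    by (simp add: add.commute mult_mono)
  have "N \<ge> 1"
    unfolding N_def using nth_prime_ge[of "?m - 1"] nth_prime_ge[of ?m] by (simp add: one_le_mult_iff)
  then have N1: "real N \<ge> 1" by simp
  have "card (top_faces n) \<le> (J + 1) ^ 2 * ?m ^ J * N ^ J"
    unfolding N_def using card_top_face_Diff_le_face_swap_bound[OF m2]
    by (intro card_top_faces_le[OF m2]) (simp add: J_def x_def le_nat_floor)
  then have "real (card (top_faces n)) \<le> real ((J + 1) ^ 2 * ?m ^ J * N ^ J)"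
    by (simp only: of_nat_le_iff)
  moreover have "card (top_faces n) \<ge> 1"
    using top_faces_nonempty[OF n] finite_top_faces by (simp add: Suc_le_eq card_gt_0_iff)
  ultimately have "ln (real (card (top_faces n))) \<le> ln (real ((J + 1) ^ 2 * ?m ^ J * N ^ J))"
    by (intro ln_mono) auto
  also have "\<dots> = 2 * ln (real J + 1) + real J * ln x + real J * ln (real N)"
    using m2 N1 unfolding x_def by (simp add: ln_mult ln_realpow add.commute)
  also have "\<dots> \<le> 2 * ln (face_swap_bound x + 1) + face_swap_bound x * ln x
      + face_swap_bound x * ln (prime_bound x * prime_bound (x + 1))"
  proof -
    have "ln (real J + 1) \<le> ln (face_swap_bound x + 1)" using JB by (intro ln_mono) auto
    moreover have "real J * ln x \<le> face_swap_bound x * ln x" using JB x2 by (intro mult_right_mono) auto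
    moreover have "real J * ln (real N) \<le> face_swap_bound x * ln (prime_bound x * prime_bound (x + 1))"
      using JB N1 NB by (intro mult_mono ln_mono) auto
    ultimately show ?thesis by linarith
  qed
  also have "\<dots> = ln_top_faces_bound x"
    unfolding ln_top_faces_bound_def by (simp add: algebra_simps)
  finally show ?thesis unfolding x_def .
qed

lemma ln_decay_le_decay_bound:
  assumes n: "n \<ge> 1" and large: "exp 1 \<le> real (Delta_rank n) * ln 2"
  shows "ln (real n) * ln (ln (ln (real n))) / ln (ln (real n)) \<le> decay_bound (real (Delta_rank n))"
proof -
  define x where "x = real (Delta_rank n)"
  define L where "L = ln (real n)"
  define U where "U = (x + 1) * ln (prime_bound (x + 1))"
  have Lx: "x * ln 2 \<le> L" unfolding L_def x_def using Delta_rank_ln_2_le_ln[OF n] by simp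
  have x0: "x * ln 2 > 0" using large unfolding x_def by (metis exp_gt_zero order_less_le_trans)
  have lx1: "1 \<le> ln (x * ln 2)" using large x0 unfolding x_def by (subst ln_ge_iff) auto
  have "L > 0" using Lx x0 by simp
  have lL: "ln (x * ln 2) \<le> ln L" using Lx x0 by (intro ln_mono) auto
  have "1 \<le> L" using Lx large exp_ge_add_one_self[of 1] unfolding x_def by linarith
  have LU: "L \<le> U"
  proof -
    have "L \<le> real (Delta_rank n + 1) * ln (real (nth_prime (Delta_rank n)))"
      unfolding L_def by (rule ln_le_Delta_rank_ln_nth_prime[OF n])
    also have "\<dots> \<le> (x + 1) * ln (prime_bound (x + 1))"
    proof (intro mult_mono)
      have "real (nth_prime (Delta_rank n)) \<le> prime_bound (x + 1)"
        unfolding x_def using nth_prime_le_prime_bound[of "Delta_rank n"] by (simp add: add.commute)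
      moreover have "real (nth_prime (Delta_rank n)) > 0" using nth_prime_ge[of "Delta_rank n"] by simp
      ultimately show "ln (real (nth_prime (Delta_rank n))) \<le> ln (prime_bound (x + 1))"
        by (intro ln_mono) auto
      show "0 \<le> ln (real (nth_prime (Delta_rank n)))" using nth_prime_ge[of "Delta_rank n"] by simp
    qed (simp_all add: x_def)
    finally show ?thesis unfolding U_def .
  qed
  have lL1: "1 \<le> ln L" using lL lx1 by simp
  then have llL: "0 \<le> ln (ln L)" by simp
  have "ln L \<le> ln U"
    using LU \<open>L > 0\<close> by (intro ln_mono) auto
  moreover have "0 < ln L" using lL1 by simp
  ultimately have llU: "ln (ln L) \<le> ln (ln U)"
    by (rule ln_mono)
  have "L * ln (ln L) / ln L \<le> U * ln (ln U) / ln L"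
    using LU llU llL \<open>1 \<le> L\<close> lL1 by (intro divide_right_mono mult_mono) auto
  also have "\<dots> \<le> U * ln (ln U) / ln (x * ln 2)"
  proof -
    have "0 \<le> ln (ln U)" using llL llU by linarith
    moreover have "0 < ln L * ln (x * ln 2)" using lL1 lx1 by simp
    ultimately show ?thesis
      using lL LU \<open>L > 0\<close> by (intro divide_left_mono mult_nonneg_nonneg) auto
  qed
  also have "\<dots> = decay_bound x"
    unfolding decay_bound_def U_def by simp
  finally show ?thesis unfolding L_def x_def .
qed

definition rank_large_enough :: "real \<Rightarrow> bool" where
  "rank_large_enough x \<longleftrightarrow>
     x * ln 2 + ln_top_faces_bound x + decay_bound x / 64 \<le> x / 2 * prime_excess x
     \<and> 1 + ln 4 \<le> ln (x / 2) \<and> exp 1 \<le> x * ln 2 \<and> 2 \<le> x"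

text \<open>\<open>prime_excess x\<close> grows like \<open>ln ln x\<close>, while \<open>ln_top_faces_bound x = O(\<surd>x ln\<^sup>2 x)\<close> and
  \<open>decay_bound x = O(x ln ln x)\<close>; the factor \<open>1/64\<close> is small enough to absorb the constants.\<close>
lemma eventually_rank_large_enough: "eventually rank_large_enough at_top"
proof -
  have "eventually (\<lambda>x :: real. x * ln 2 + ln_top_faces_bound x + decay_bound x / 64 \<le> x / 2 * prime_excess x) at_top"
    unfolding ln_top_faces_bound_def face_swap_bound_def decay_bound_def prime_excess_def prime_bound_def
    by real_asymp
  moreover have "eventually (\<lambda>x :: real. 1 + ln 4 \<le> ln (x / 2)) at_top"
    by real_asymp
  moreover have "eventually (\<lambda>x :: real. exp 1 \<le> x * ln 2) at_top"
    by real_asymp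
  moreover have "eventually (\<lambda>x :: real. 2 \<le> x) at_top"
    by real_asymp
  ultimately show ?thesis
    unfolding rank_large_enough_def by (intro eventually_conj)
qed

lemma eventually_rank_large_enough_Delta: "eventually (\<lambda>n. rank_large_enough (real (Delta_rank n))) at_top"
proof -
  obtain x0 where x0: "\<And>x. x \<ge> x0 \<Longrightarrow> rank_large_enough x"
    using eventually_rank_large_enough unfolding eventually_at_top_linorder by auto
  show ?thesis
    using eventually_Delta_rank_ge[of "nat \<lceil>x0\<rceil>"]
  proof (rule eventually_mono)
    fix n assume "nat \<lceil>x0\<rceil> \<le> Delta_rank n"
    then have "x0 \<le> real (Delta_rank n)" by linarith
    then show "rank_large_enough (real (Delta_rank n))" by (rule x0)
  qed
qed

lemma abs_red_euler_le:
  assumes n: "n \<ge> 1" and m2: "Delta_rank n \<ge> 2"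
    and alpha: "\<bar>alpha n\<bar> \<le> c * (fact (dimc (Delta n) + 1))\<^sup>2" and "c > 0"
  shows "\<bar>real_of_int (red_euler (Delta n))\<bar>
    \<le> 2 * c * (fact (Delta_rank n) * 2 ^ Delta_rank n * real (card (top_faces n)))"
proof -
  let ?m = "Delta_rank n"
  define H where "H = Hcoef 1 (?m - 1)"
  define f where "f = real (card (top_faces n))"
  have dm: "dimc (Delta n) + 1 = ?m" using m2 by (simp add: dimc_Delta)
  have "H > 0" unfolding H_def using m2 by (intro Hcoef_1_pos) simp
  have Hle: "H \<le> 2 ^ ?m / (fact ?m - 1)" unfolding H_def using Hcoef_1_le[of "?m - 1"] m2 by simp
  have "f \<ge> 1"
    unfolding f_def using top_faces_nonempty[OF n] finite_top_faces by (simp add: Suc_le_eq card_gt_0_iff)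
  have fm2: "fact ?m \<ge> (2 :: real)"
    using fact_mono[of 2 ?m] m2 by simp
  have fv: "fvec (Delta n) (dimc (Delta n)) = card (top_faces n)"
    using m2 by (intro fvec_Delta_dimc) simp
  have "alpha n = real_of_int (red_euler (Delta n)) / (H * f)"
    unfolding alpha_def fv unfolding dimc_Delta H_def f_def ..
  then have "\<bar>real_of_int (red_euler (Delta n))\<bar> = \<bar>alpha n\<bar> * H * f"
    using \<open>H > 0\<close> \<open>f \<ge> 1\<close> by (simp add: abs_mult)
  also have "\<dots> \<le> c * (fact ?m)\<^sup>2 * (2 ^ ?m / (fact ?m - 1)) * f"
    using alpha[unfolded dm] \<open>H > 0\<close> Hle \<open>f \<ge> 1\<close> \<open>c > 0\<close> by (intro mult_mono) auto
  also have "\<dots> \<le> c * (2 * fact ?m * 2 ^ ?m) * f"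
  proof -
    have "(fact ?m :: real)\<^sup>2 \<le> 2 * fact ?m * (fact ?m - 1)"
      using mult_nonneg_nonneg[of "fact ?m :: real" "fact ?m - 2"] fm2
      by (simp add: power2_eq_square algebra_simps)
    then have "(fact ?m :: real)\<^sup>2 / (fact ?m - 1) \<le> 2 * fact ?m"
      using fm2 by (simp add: divide_le_eq)
    then have "(fact ?m :: real)\<^sup>2 / (fact ?m - 1) * 2 ^ ?m \<le> 2 * fact ?m * 2 ^ ?m"
      by (rule mult_right_mono) simp
    then have "(fact ?m :: real)\<^sup>2 * (2 ^ ?m / (fact ?m - 1)) \<le> 2 * fact ?m * 2 ^ ?m"
      by (simp only: times_divide_eq_right times_divide_eq_left)
    then have "c * ((fact ?m)\<^sup>2 * (2 ^ ?m / (fact ?m - 1))) * f \<le> c * (2 * fact ?m * 2 ^ ?m) * f"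
      using \<open>c > 0\<close> \<open>f \<ge> 1\<close> by (intro mult_right_mono mult_left_mono) auto
    then show ?thesis by (simp only: mult.assoc)
  qed
  finally show ?thesis
    unfolding f_def by (simp add: algebra_simps)
qed

text \<open>Taking logarithms, \<open>ln n\<close> beats \<open>ln (m! 2\<^sup>m f)\<close> by the term \<open>(m/2) prime_excess m\<close>,
  which eventually dominates everything else.\<close>
lemma rank_fact_top_faces_le:
  assumes n: "n \<ge> 1" and large: "rank_large_enough (real (Delta_rank n))"
  shows "fact (Delta_rank n) * 2 ^ Delta_rank n * real (card (top_faces n))
    \<le> real n * exp (- (1 / 64) * (ln (real n) * ln (ln (ln (real n))) / ln (ln (real n))))"
proof -
  let ?m = "Delta_rank n"
  have x: "real ?m * ln 2 + ln_top_faces_bound (real ?m) + decay_bound (real ?m) / 64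
      \<le> real ?m / 2 * prime_excess (real ?m)"
    and large1: "1 + ln 4 \<le> ln (real ?m / 2)" and large2: "exp 1 \<le> real ?m * ln 2"
    and m2: "?m \<ge> 2"
    using large unfolding rank_large_enough_def by auto
  define X where "X = ln (real n) * ln (ln (ln (real n))) / ln (ln (real n))"
  define f where "f = real (card (top_faces n))"
  have "f \<ge> 1"
    unfolding f_def using top_faces_nonempty[OF n] finite_top_faces by (simp add: Suc_le_eq card_gt_0_iff)
  have "ln (fact ?m) + real ?m / 2 * prime_excess (real ?m) \<le> ln (real n)"
    using sum_ln_nth_primes_ge(2)[OF m2 large1] sum_ln_first_primes_le_ln[OF n] by linarith
  moreover have "ln f \<le> ln_top_faces_bound (real ?m)"
    unfolding f_def by (rule ln_card_top_faces_le[OF n m2])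
  moreover have "X \<le> decay_bound (real ?m)"
    unfolding X_def by (rule ln_decay_le_decay_bound[OF n large2])
  ultimately have ineq: "ln (fact ?m) + real ?m * ln 2 + ln f \<le> ln (real n) - X / 64"
    using x by linarith
  have "fact ?m * 2 ^ ?m * f = exp (ln (fact ?m) + real ?m * ln 2 + ln f)"
  proof -
    have "exp (real ?m * ln 2) = 2 ^ ?m"
      by (simp add: exp_of_nat_mult)
    then show ?thesis
      using \<open>f \<ge> 1\<close> by (simp only: exp_add exp_ln fact_gt_zero)
  qed
  also have "\<dots> \<le> exp (ln (real n) - X / 64)"
    using ineq by (simp only: exp_le_cancel_iff)
  also have "\<dots> = exp (ln (real n)) / exp (X / 64)"
    by (rule exp_diff)
  also have "\<dots> = real n * exp (- (1 / 64) * X)"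
  proof -
    have "exp (- (1 / 64) * X) = exp (0 - X / 64)"
      by simp
    also have "\<dots> = 1 / exp (X / 64)"
      by (simp only: exp_diff exp_zero)
    finally show ?thesis
      using n by simp
  qed
  finally show ?thesis
    unfolding X_def f_def .
qed

lemma abs_red_euler_le_decay:
  assumes "n \<ge> 1" and "rank_large_enough (real (Delta_rank n))"
    and "\<bar>alpha n\<bar> \<le> c * (fact (dimc (Delta n) + 1))\<^sup>2" and "c > 0"
  shows "\<bar>real_of_int (red_euler (Delta n))\<bar>
    \<le> 2 * c * (real n * exp (- (1 / 64) * (ln (real n) * ln (ln (ln (real n))) / ln (ln (real n)))))"
proof -
  have "Delta_rank n \<ge> 2"
    using assms(2) unfolding rank_large_enough_def by simp
  then have "\<bar>real_of_int (red_euler (Delta n))\<bar>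
      \<le> 2 * c * (fact (Delta_rank n) * 2 ^ Delta_rank n * real (card (top_faces n)))"
    using abs_red_euler_le assms(1,3,4) by blast
  also have "\<dots> \<le> 2 * c * (real n * exp (- (1 / 64) * (ln (real n) * ln (ln (ln (real n))) / ln (ln (real n)))))"
    using rank_fact_top_faces_le[OF assms(1,2)] \<open>c > 0\<close> by (intro mult_left_mono) auto
  finally show ?thesis .
qed

theorem proposition1p4:
  assumes "alpha \<in> O(\<lambda>n. (fact (dimc (Delta n) + 1))\<^sup>2)"
  shows "\<exists>A>0. (\<lambda>n. real_of_int (red_euler (Delta n))) \<in>
           O(\<lambda>n. real n * exp (- A * (ln (real n) * ln (ln (ln (real n))) / ln (ln (real n)))))"
proof (intro exI conjI)
  obtain c where "c > 0"
    and alpha: "eventually (\<lambda>n. norm (alpha n) \<le> c * norm ((fact (dimc (Delta n) + 1))\<^sup>2 :: real)) at_top"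
    using assms by (elim landau_o.bigE)
  have "eventually (\<lambda>n. norm (real_of_int (red_euler (Delta n)))
      \<le> 2 * c * norm (real n * exp (- (1 / 64) * (ln (real n) * ln (ln (ln (real n))) / ln (ln (real n)))))) at_top"
    using alpha eventually_rank_large_enough_Delta eventually_ge_at_top[of 1]
  proof eventually_elim
    case (elim n)
    then show ?case
      using abs_red_euler_le_decay[of n c] \<open>c > 0\<close> by simp
  qed
  then show "(\<lambda>n. real_of_int (red_euler (Delta n))) \<in>
      O(\<lambda>n. real n * exp (- (1 / 64) * (ln (real n) * ln (ln (ln (real n))) / ln (ln (real n)))))"
    using \<open>c > 0\<close> by (intro landau_o.bigI[of "2 * c"]) auto
qed simp

end
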